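(* In the setting below, if $q>(30n d_1)^{\frac{2t+2}{t-2n}}$, then the Markoff–Hurwitz-type system has at least one solution in $(\mathbb F_q^* )^t$.
   Context: Setting: $\mathbb F_q$ is a finite field, $t,n$ positive integers with $1\le n<\frac{t-1}{2}$, and $d_1>\cdots>d_t\ge 2$ integers not divisible by $\mathrm{char}(\mathbb F_q)$. $c_{ji}$ ($1\le i,j\le n$) are positive integers with $c_{j1}+\cdots+c_{jn}<d_t$ for each $j$. $A=(a_{ji})\in\mathbb F_q^{n\times t}$ satisfies hypothesis (H): every $n\times n$ submatrix of $A$ (formed by any choice of $n$ columns) has rank $n$. $a_1,\dots,a_n\in\mathbb F_q$ with $a_j\ne0$ for some $j$, and $b_1,\dots,b_n\in\mathbb F_q\setminus\{0\}$. The Markoff–Hurwitz-type system is $\sum_{i=1}^t a_{ji}X_i^{d_i}+a_j=b_jX_1^{c_{j1}}\cdots X_n^{c_{jn}}$, $1\le j\le n$. *)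

theory Defs
  imports Complex_Main "Jordan_Normal_Form.DL_Rank"
begin

(* Rank of a matrix over a field (Jordan_Normal_Form's vec_space.rank,
   the dimension of the column span); the first argument of vec_space is the
   number of rows (dimension of column vectors). *)
definition mat_rank :: "'a::field mat \<Rightarrow> nat" where
  "mat_rank M = vec_space.rank (dim_row M) M"

definition hyp_H :: "nat \<Rightarrow> nat \<Rightarrow> (nat \<Rightarrow> nat \<Rightarrow> 'a::field) \<Rightarrow> bool" where
  "hyp_H n t A \<longleftrightarrow>
     (\<forall>f. inj_on f {0..<n} \<longrightarrow> f ` {0..<n} \<subseteq> {1..t} \<longrightarrow>
        mat_rank (mat n n (\<lambda>(r, k). A (r + 1) (f k))) = n)"

end

theory Submission
  imports Defs "HOL-Computational_Algebra.Polynomial" "HOL-Computational_Algebra.Primes"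
    "HOL-Number_Theory.Cong" "HOL-Library.Real_Mod"
begin

text \<open>Treat \<open>x\<^sub>1, \<dots>, x\<^sub>n\<close> as parameters. By (H) the block of \<open>A\<close> on the first \<open>n\<close> columns is
  invertible, so for a fixed right-hand side \<open>w\<close> of the remaining diagonal system in
  \<open>x\<^sub>n\<^sub>+\<^sub>1, \<dots>, x\<^sub>t\<close> each \<open>x\<^sub>k\<^sup>d\<^sup>k\<close> (\<open>k \<le> n\<close>) is an affine combination of monomials of degree
  \<open>< d\<^sub>k\<close>; a dimension count bounds the number of such parameters by \<open>d\<^sub>1\<^sup>n\<close>. So if the system had
  no solution, at least \<open>(q - 1)\<^sup>n / d\<^sub>1\<^sup>n\<close> right-hand sides \<open>w\<close> would make the diagonal system
  unsolvable. On the other hand, expanding the number of solutions of the diagonal system in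
  additive characters and applying Parseval, the number of such \<open>w\<close> is at most \<open>q\<^sup>n\<close> times a mean
  square of products of the sums \<open>\<Sum>\<^sub>y\<^sub>\<noteq>\<^sub>0 \<psi>(u y\<^sup>d)\<close> (\<open>\<psi>\<close> a nontrivial additive character),
  which is small because these sums satisfy \<open>|\<cdot>|\<^sup>2 \<le> q d\<^sup>2\<close> pointwise, \<open>q (q - 1) d\<close> on average, and (H) lets a nonzero character annihilate
  fewer than \<open>n\<close> of the linear forms. For \<open>q > (30 n d\<^sub>1)\<^bsup>(2t+2)/(t-2n)\<^esup>\<close> the two counts are
  incompatible.\<close>

section \<open>Finite fields\<close>

lemma prime_CHAR_finite_field: "prime CHAR('a::{finite,field})"
  by (intro prime_CHAR_semidom finite_imp_CHAR_pos) simp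

lemma CHAR_ge_2_finite_field: "CHAR('a::{finite,field}) \<ge> 2"
  using prime_CHAR_finite_field prime_ge_2_nat by blast

lemma card_UNIV_field_ge_2: "card (UNIV :: 'a::{finite,field} set) \<ge> 2"
proof -
  have "card {0, 1::'a} \<le> card (UNIV :: 'a set)" by (intro card_mono) auto
  thus ?thesis by simp
qed

lemma card_nonzero_field: "card (UNIV - {0::'a::{finite,field}}) = card (UNIV :: 'a set) - 1"
  by (simp add: card_Diff_singleton)

lemma power_card_minus_1_field:
  fixes x :: "'a::{finite,field}"
  assumes "x \<noteq> 0"
  shows "x ^ (card (UNIV :: 'a set) - 1) = 1"
proof -
  let ?U = "UNIV - {0::'a}"
  have "(\<Prod>y\<in>?U. y) = (\<Prod>y\<in>?U. x * y)"
    by (rule prod.reindex_bij_witness[of _ "\<lambda>y. x * y" "\<lambda>y. y / x"]) (use assms in auto)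
  also have "\<dots> = x ^ card ?U * (\<Prod>y\<in>?U. y)"
    by (simp add: prod.distrib)
  finally have "x ^ card ?U * (\<Prod>y\<in>?U. y) = 1 * (\<Prod>y\<in>?U. y)" by simp
  moreover have "(\<Prod>y\<in>?U. y) \<noteq> 0" by simp
  ultimately show ?thesis by (simp add: card_nonzero_field)
qed

lemma power_card_field: "x ^ card (UNIV :: 'a set) = (x :: 'a::{finite,field})"
proof (cases "x = 0")
  case False
  have "card (UNIV :: 'a set) = Suc (card (UNIV :: 'a set) - 1)"
    using card_UNIV_field_ge_2[where 'a='a] by simp
  hence "x ^ card (UNIV :: 'a set) = x * x ^ (card (UNIV :: 'a set) - 1)"
    by (metis power_Suc)
  thus ?thesis using power_card_minus_1_field[OF False] by simp
qed (use card_UNIV_field_ge_2[where 'a='a] in auto)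

lemma card_roots_le:
  fixes P :: "'a::idom poly"
  assumes "coeff P N \<noteq> 0" "degree P \<le> N"
  shows "card {x. poly P x = 0} \<le> N"
proof -
  have "P \<noteq> 0" using assms(1) by auto
  thus ?thesis using card_poly_roots_bound[of P] assms(2) by linarith
qed

lemma card_power_eq_le:
  fixes c :: "'a::idom"
  assumes "d \<ge> 1"
  shows "card {x. x ^ d = c} \<le> d"
proof -
  let ?P = "monom 1 d - [:c:]"
  have "coeff ?P d = 1" using assms by (cases d) simp_all
  moreover have "degree ?P \<le> d"
    by (rule order.trans[OF degree_diff_le_max]) (simp add: degree_monom_le)
  ultimately have "card {x. poly ?P x = 0} \<le> d" by (intro card_roots_le) auto
  thus ?thesis by (simp add: poly_monom)
qed

lemma prod_of_bool: "finite A \<Longrightarrow> (\<Prod>a\<in>A. of_bool (P a)) = (of_bool (\<forall>a\<in>A. P a) :: 'b::comm_semiring_1)"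
  by (induction A rule: finite_induct) auto

definition add_closed :: "'a::{finite,field} set \<Rightarrow> bool" where
  "add_closed G \<longleftrightarrow> 0 \<in> G \<and> (\<forall>x\<in>G. \<forall>y\<in>G. x + y \<in> G)"

lemma add_closed_of_nat_mult: "add_closed G \<Longrightarrow> x \<in> G \<Longrightarrow> of_nat k * x \<in> G"
  by (induction k) (auto simp: add_closed_def distrib_right)

lemma of_nat_CHAR_minus_1: "of_nat (CHAR('a) - 1) = (- 1 :: 'a::{finite,field})"
proof -
  have "CHAR('a) > 0" by (rule finite_imp_CHAR_pos[OF finite_UNIV])
  hence "(of_nat (CHAR('a) - 1) :: 'a) + 1 = of_nat CHAR('a)"
    by (metis Suc_diff_1 add.commute of_nat_Suc)
  thus ?thesis by (simp add: eq_neg_iff_add_eq_0)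
qed

lemma add_closed_uminus: "add_closed G \<Longrightarrow> x \<in> G \<Longrightarrow> - x \<in> (G::'a::{finite,field} set)"
  using add_closed_of_nat_mult[of G x "CHAR('a) - 1"] by (simp only: of_nat_CHAR_minus_1 mult_minus_left mult_1)

lemma inverse_of_nat_eq_of_nat:
  assumes "(of_nat k :: 'a::{finite,field}) \<noteq> 0"
  obtains l where "inverse (of_nat k :: 'a) = of_nat l"
proof -
  let ?q = "card (UNIV :: 'a set)"
  have "?q - 1 = Suc (?q - 2)" using card_UNIV_field_ge_2[where 'a='a] by simp
  hence "(of_nat k :: 'a) * of_nat k ^ (?q - 2) = 1"
    using power_card_minus_1_field[OF assms] by (simp only: power_Suc)
  hence "inverse (of_nat k :: 'a) = of_nat (k ^ (?q - 2))"
    using assms by (simp add: field_simps)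
  thus ?thesis by (rule that)
qed

lemma of_nat_mult_notin_add_closed:
  fixes G :: "'a::{finite,field} set"
  assumes G: "add_closed G" and x: "x \<notin> G" and m: "(of_nat m :: 'a) \<noteq> 0"
  shows "of_nat m * x \<notin> G"
proof
  assume "of_nat m * x \<in> G"
  obtain l where l: "inverse (of_nat m :: 'a) = of_nat l"
    using m by (rule inverse_of_nat_eq_of_nat)
  have "x = inverse (of_nat m) * (of_nat m * x)" using m by (simp flip: mult.assoc)
  also have "\<dots> \<in> G" unfolding l by (rule add_closed_of_nat_mult[OF G \<open>of_nat m * x \<in> G\<close>])
  finally show False using x by contradiction
qed

definition add_extend :: "'a::{finite,field} set \<Rightarrow> 'a \<Rightarrow> 'a set" where
  "add_extend G x = (\<lambda>(g, k). g + of_nat k * x) ` (G \<times> {..<CHAR('a)})"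

lemma add_closed_add_extend:
  assumes G: "add_closed G"
  shows "add_closed (add_extend G x)"
  unfolding add_closed_def
proof (intro conjI ballI)
  let ?p = "CHAR('a)"
  have p0: "?p > 0" using CHAR_ge_2_finite_field[where 'a='a] by simp
  show "0 \<in> add_extend G x" unfolding add_extend_def using G p0 by (force simp: add_closed_def image_iff)
  fix u v assume "u \<in> add_extend G x" "v \<in> add_extend G x"
  then obtain g k g' k' where gk: "g \<in> G" "u = g + of_nat k * x"
    and gk': "g' \<in> G" "v = g' + of_nat k' * x" unfolding add_extend_def by auto
  have "u + v = (g + g') + of_nat (k + k') * x"
    using gk gk' by (simp add: algebra_simps)
  also have "(of_nat (k + k') :: 'a) = of_nat ((k + k') mod ?p)"
    by (subst of_nat_eq_iff_cong_CHAR) (simp add: cong_def)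
  finally have "u + v = (g + g') + of_nat ((k + k') mod ?p) * x" .
  moreover have "g + g' \<in> G" using G gk gk' by (simp add: add_closed_def)
  ultimately show "u + v \<in> add_extend G x"
    unfolding add_extend_def using p0 by (intro image_eqI[of _ _ "(g + g', (k + k') mod ?p)"]) auto
qed

text \<open>The translates of \<open>G\<close> by the multiples \<open>k x\<close>, \<open>k < CHAR('a)\<close>, are pairwise disjoint.\<close>

lemma card_add_extend:
  fixes G :: "'a::{finite,field} set"
  assumes G: "add_closed G" and x: "x \<notin> G"
  shows "card (add_extend G x) = card G * CHAR('a)"
proof -
  let ?p = "CHAR('a)"
  have same_multiple: "k = k'" if "g \<in> G" "g' \<in> G" "k' < ?p" "k \<le> k'"
      "g + of_nat k * x = g' + of_nat k' * x" for g g' k k'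
  proof (rule ccontr)
    assume "k \<noteq> k'"
    hence "(of_nat (k' - k) :: 'a) \<noteq> 0"
      using that by (subst of_nat_eq_0_iff_char_dvd) (auto dest: dvd_imp_le)
    moreover have "of_nat (k' - k) * x = g + - g'"
      using that by (simp add: algebra_simps)
    moreover have "g + - g' \<in> G" using G that add_closed_uminus[OF G, of g'] unfolding add_closed_def by blast
    ultimately show False using of_nat_mult_notin_add_closed[OF G x] by metis
  qed
  have "inj_on (\<lambda>(g, k). g + of_nat k * x) (G \<times> {..<?p})"
  proof (rule inj_onI, clarify)
    fix g k g' k'
    assume "g \<in> G" "k < ?p" "g' \<in> G" "k' < ?p" "g + of_nat k * x = g' + of_nat k' * x"
    moreover from this have "k = k'"
      using same_multiple[of g g' k' k] same_multiple[of g' g k k'] by fastforce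
    ultimately show "g = g' \<and> k = k'" by simp
  qed
  thus ?thesis unfolding add_extend_def by (simp add: card_image card_cartesian_product)
qed

lemma card_UNIV_field_prime_power: "\<exists>e. card (UNIV :: 'a::{finite,field} set) = CHAR('a) ^ e"
proof -
  let ?p = "CHAR('a)"
  let ?S = "{G :: 'a set. add_closed G \<and> (\<exists>e. card G = ?p ^ e)}"
  have "{0} \<in> ?S" by (auto simp: add_closed_def intro: exI[of _ 0])
  moreover have "card H < Suc (card (UNIV :: 'a set))" for H :: "'a set"
    using card_mono[of UNIV H] by simp
  ultimately have "\<exists>G. G \<in> ?S \<and> (\<forall>H. H \<in> ?S \<longrightarrow> card H \<le> card G)"
    by (intro ex_has_greatest_nat[of "\<lambda>G. G \<in> ?S" "{0}" card]) blast+
  then obtain G where G: "G \<in> ?S" and G_max: "\<And>H. H \<in> ?S \<Longrightarrow> card H \<le> card G"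
    by blast
  then obtain e where e: "card G = ?p ^ e" by blast
  have "G = UNIV"
  proof (rule ccontr)
    assume "G \<noteq> UNIV"
    then obtain x where x: "x \<notin> G" by blast
    have "card (add_extend G x) = ?p ^ Suc e" using card_add_extend[of G x] G x e by simp
    moreover have "add_closed (add_extend G x)" using add_closed_add_extend G by blast
    ultimately have "card (add_extend G x) \<le> card G" by (intro G_max) blast
    hence "?p ^ Suc e \<le> ?p ^ e" using e \<open>card (add_extend G x) = _\<close> by simp
    thus False using CHAR_ge_2_finite_field[where 'a='a] by simp
  qed
  thus ?thesis using e by blast
qed

section \<open>The canonical additive character\<close>

definition field_degree :: "'a::{finite,field} itself \<Rightarrow> nat" where
  "field_degree _ = (SOME e. card (UNIV :: 'a set) = CHAR('a) ^ e)"

lemma card_UNIV_eq_CHAR_power: "card (UNIV :: 'a::{finite,field} set) = CHAR('a) ^ field_degree TYPE('a)"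
  unfolding field_degree_def by (rule someI_ex[OF card_UNIV_field_prime_power])

lemma field_degree_pos: "field_degree TYPE('a::{finite,field}) > 0"
  using card_UNIV_eq_CHAR_power[where 'a='a] card_UNIV_field_ge_2[where 'a='a]
  by (cases "field_degree TYPE('a)") auto

definition field_trace :: "'a::{finite,field} \<Rightarrow> 'a" where
  "field_trace x = (\<Sum>k<field_degree TYPE('a). x ^ (CHAR('a) ^ k))"

lemma field_trace_add: "field_trace (x + y) = field_trace x + field_trace (y::'a::{finite,field})"
proof -
  have "(x + y) ^ (CHAR('a) ^ k) = x ^ (CHAR('a) ^ k) + y ^ (CHAR('a) ^ k)" for k
    by (rule freshmans_dream'[OF prime_CHAR_finite_field]) simp
  thus ?thesis unfolding field_trace_def by (simp add: sum.distrib)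
qed

lemma field_trace_power_CHAR: "field_trace x ^ CHAR('a) = field_trace (x::'a::{finite,field})"
proof -
  let ?p = "CHAR('a)" and ?e = "field_degree TYPE('a)"
  have "field_trace x ^ ?p = (\<Sum>k<?e. x ^ (?p ^ Suc k))"
    unfolding field_trace_def
    by (subst freshmans_dream_sum[OF prime_CHAR_finite_field]) (simp_all flip: power_mult add: mult.commute)
  also have "\<dots> = (\<Sum>k<Suc ?e. x ^ (?p ^ k)) - x"
    by (subst sum.lessThan_Suc_shift) simp
  also have "\<dots> = field_trace x"
    using power_card_field[of x] by (simp add: field_trace_def card_UNIV_eq_CHAR_power)
  finally show ?thesis .
qed

text \<open>The trace is a polynomial of degree \<open>p\<^sup>e\<^sup>-\<^sup>1 < q\<close>, so it cannot vanish on all of the field.\<close>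

lemma field_trace_nonzero: "\<exists>x::'a::{finite,field}. field_trace x \<noteq> 0"
proof (rule ccontr)
  assume "\<not> (\<exists>x::'a. field_trace x \<noteq> 0)"
  hence all: "field_trace x = 0" for x :: 'a by blast
  let ?p = "CHAR('a)" and ?e = "field_degree TYPE('a)"
  let ?T = "(\<Sum>k<?e. monom (1::'a) (?p ^ k))"
  have p2: "?p \<ge> 2" by (rule CHAR_ge_2_finite_field)
  have e: "?e > 0" by (rule field_degree_pos)
  have "coeff ?T (?p ^ (?e - 1)) = (\<Sum>k\<in>{?e - 1}. 1)"
    unfolding coeff_sum coeff_monom
    by (rule sum.mono_neutral_cong_right) (use e p2 in auto)
  hence "coeff ?T (?p ^ (?e - 1)) \<noteq> 0" by simp
  moreover have "degree ?T \<le> ?p ^ (?e - 1)"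
  proof (rule degree_le, intro allI impI)
    fix i assume i: "?p ^ (?e - 1) < i"
    have "?p ^ k \<noteq> i" if "k < ?e" for k
      using power_increasing[of k "?e - 1" ?p] that p2 i by auto
    thus "coeff ?T i = 0" by (simp add: coeff_sum)
  qed
  ultimately have "card {x. poly ?T x = 0} \<le> ?p ^ (?e - 1)" by (rule card_roots_le)
  moreover have "{x. poly ?T x = 0} = UNIV" using all by (auto simp: poly_sum poly_monom field_trace_def)
  moreover have "?p ^ (?e - 1) < ?p ^ ?e" using p2 e by (intro power_strict_increasing) auto
  ultimately show False using card_UNIV_eq_CHAR_power[where 'a='a] by simp
qed

lemma of_nat_power_CHAR: "(of_nat k :: 'a::{finite,field}) ^ CHAR('a) = of_nat k"
proof (induction k)
  case 0 thus ?case using CHAR_ge_2_finite_field[where 'a='a] by simp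
next
  case (Suc k)
  have "(1 + of_nat k :: 'a) ^ CHAR('a) = 1 ^ CHAR('a) + of_nat k ^ CHAR('a)"
    by (rule freshmans_dream[OF prime_CHAR_finite_field]) simp
  thus ?case using Suc by simp
qed

text \<open>\<open>X\<^sup>p - X\<close> has at most \<open>p\<close> roots, and the \<open>p\<close> elements \<open>of_nat k\<close> are roots.\<close>

lemma power_CHAR_eq_self_imp_of_nat:
  assumes "(y::'a::{finite,field}) ^ CHAR('a) = y"
  shows "\<exists>k<CHAR('a). y = of_nat k"
proof -
  let ?p = "CHAR('a)"
  have p2: "?p \<ge> 2" by (rule CHAR_ge_2_finite_field)
  let ?P = "monom (1::'a) ?p - monom 1 1"
  have "coeff ?P ?p \<noteq> 0" using p2 by simp
  moreover have "degree ?P \<le> ?p"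
    using p2 by (intro order.trans[OF degree_diff_le_max]) (simp add: degree_monom_eq)
  ultimately have "card {x. poly ?P x = 0} \<le> ?p" by (rule card_roots_le)
  hence card_fixed: "card {x::'a. x ^ ?p = x} \<le> ?p" by (simp add: poly_monom)
  have sub: "of_nat ` {..<?p} \<subseteq> {x::'a. x ^ ?p = x}" using of_nat_power_CHAR by auto
  have "inj_on (of_nat :: nat \<Rightarrow> 'a) {..<?p}"
    by (rule inj_onI) (auto simp: of_nat_eq_iff_cong_CHAR dest: cong_less_modulus_unique_nat)
  hence "card (of_nat ` {..<?p} :: 'a set) = ?p" by (simp add: card_image)
  moreover have "card (of_nat ` {..<?p} :: 'a set) \<le> card {x::'a. x ^ ?p = x}"
    using sub by (intro card_mono) auto
  ultimately have "of_nat ` {..<?p} = {x::'a. x ^ ?p = x}"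
    using card_fixed sub by (intro card_subset_eq) auto
  thus ?thesis using assms by auto
qed

definition field_trace_nat :: "'a::{finite,field} \<Rightarrow> nat" where
  "field_trace_nat x = (SOME k. k < CHAR('a) \<and> field_trace x = of_nat k)"

lemma field_trace_nat:
  "field_trace_nat x < CHAR('a)" "field_trace x = of_nat (field_trace_nat (x::'a::{finite,field}))"
  using someI_ex[OF power_CHAR_eq_self_imp_of_nat[OF field_trace_power_CHAR[of x]]]
  unfolding field_trace_nat_def by auto

definition add_char :: "'a::{finite,field} \<Rightarrow> complex" where
  "add_char x = cis (2 * pi * real (field_trace_nat x) / real CHAR('a))"

lemma cis_2pi_cong:
  assumes "[a = b] (mod p)"
  shows "cis (2 * pi * real a / real p) = cis (2 * pi * real b / real (p::nat))"
proof -
  have "cis (2 * pi * real a / real p) = cis (2 * pi * real (a mod p) / real p)" for a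
  proof (cases "p = 0")
    case False
    have "real a = real (a div p) * real p + real (a mod p)"
      by (metis div_mult_mod_eq of_nat_add of_nat_mult)
    hence "2 * pi * real a / real p = 2 * pi * real (a div p) + 2 * pi * real (a mod p) / real p"
      using False by (simp add: field_simps)
    thus ?thesis by (simp add: cis_mult[symmetric])
  qed simp
  thus ?thesis using assms unfolding cong_def by metis
qed

lemma add_char_add: "add_char (x + y) = add_char x * add_char (y::'a::{finite,field})"
proof -
  have "(of_nat (field_trace_nat (x + y)) :: 'a) = of_nat (field_trace_nat x + field_trace_nat y)"
    using field_trace_nat(2) field_trace_add by (metis of_nat_add)
  hence "[field_trace_nat (x + y) = field_trace_nat x + field_trace_nat y] (mod CHAR('a))"
    by (simp only: of_nat_eq_iff_cong_CHAR)
  hence "add_char (x + y) = cis (2 * pi * real (field_trace_nat x + field_trace_nat y) / real CHAR('a))"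
    unfolding add_char_def by (rule cis_2pi_cong)
  thus ?thesis by (simp add: add_char_def cis_mult add_divide_distrib distrib_left)
qed

lemma add_char_nonzero [simp]: "add_char x \<noteq> 0"
  by (simp add: add_char_def)

lemma add_char_0 [simp]: "add_char (0::'a::{finite,field}) = 1"
  using add_char_add[of "0::'a" 0] by simp

lemma add_char_uminus: "add_char (- x) = cnj (add_char (x::'a::{finite,field}))"
proof -
  have "add_char (- x) * add_char x = 1" using add_char_add[of "-x" x] by simp
  hence "add_char (- x) = inverse (add_char x)" by (simp add: field_simps)
  thus ?thesis by (simp add: add_char_def cis_cnj)
qed

lemma add_char_sum: "finite A \<Longrightarrow> add_char (\<Sum>j\<in>A. f j) = (\<Prod>j\<in>A. add_char (f j :: 'a::{finite,field}))"
  by (induction A rule: finite_induct) (simp_all add: add_char_add)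

lemma add_char_nontrivial: "\<exists>x::'a::{finite,field}. add_char x \<noteq> 1"
proof -
  let ?p = "CHAR('a)"
  obtain x :: 'a where "field_trace x \<noteq> 0" using field_trace_nonzero by blast
  hence k: "0 < field_trace_nat x" "field_trace_nat x < ?p"
    using field_trace_nat[of x] by (auto intro: gr0I)
  have "add_char x \<noteq> 1"
  proof
    assume "add_char x = 1"
    then obtain n :: int where "2 * pi * real (field_trace_nat x) / real ?p = of_int n * (2 * pi)"
      unfolding add_char_def cis_eq_1_iff by blast
    hence "real (field_trace_nat x) = of_int n * real ?p" using k by (simp add: field_simps)
    hence "int (field_trace_nat x) = n * int ?p" by (metis of_int_eq_iff of_int_mult of_int_of_nat_eq)
    hence "?p dvd field_trace_nat x" by (metis dvd_triv_right int_dvd_int_iff)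
    thus False using k by (auto dest: dvd_imp_le)
  qed
  thus ?thesis by blast
qed

lemma sum_add_char_mult:
  "(\<Sum>x\<in>UNIV. add_char (a * x)) = of_bool (a = 0) * of_nat (card (UNIV :: 'a set))"
  for a :: "'a::{finite,field}"
proof (cases "a = 0")
  case False
  obtain x0 :: 'a where x0: "add_char x0 \<noteq> 1" using add_char_nontrivial by blast
  have "(\<Sum>y\<in>UNIV. add_char (y::'a)) = (\<Sum>y\<in>UNIV. add_char (x0 + y))"
    by (rule sum.reindex_bij_witness[of _ "\<lambda>y. x0 + y" "\<lambda>y. y - x0"]) auto
  also have "\<dots> = add_char x0 * (\<Sum>y\<in>UNIV. add_char (y::'a))"
    by (simp add: add_char_add sum_distrib_left)
  finally have "(\<Sum>y\<in>UNIV. add_char (y::'a)) = 0" using x0 by simp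
  moreover have "(\<Sum>x\<in>UNIV. add_char (a * x)) = (\<Sum>y\<in>UNIV. add_char (y::'a))"
    by (rule sum.reindex_bij_witness[of _ "\<lambda>y. y / a" "\<lambda>x. a * x"]) (use False in auto)
  ultimately show ?thesis using False by simp
qed simp

section \<open>Monomial character sums\<close>

definition mono_sum :: "nat \<Rightarrow> 'a::{finite,field} \<Rightarrow> complex" where
  "mono_sum d u = (\<Sum>x\<in>UNIV - {0}. add_char (u * x ^ d))"

lemma mono_sum_0: "mono_sum d (0::'a::{finite,field}) = of_nat (card (UNIV :: 'a set) - 1)"
  by (simp add: mono_sum_def card_nonzero_field)

lemma mono_sum_mult_power:
  assumes "z \<noteq> 0"
  shows "mono_sum d (u * z ^ d) = mono_sum d (u::'a::{finite,field})"
  unfolding mono_sum_def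
  by (rule sum.reindex_bij_witness[of _ "\<lambda>x. x / z" "\<lambda>x. z * x"])
     (use assms in \<open>auto simp: power_mult_distrib mult_ac\<close>)

lemma sum_norm_mono_sum_eq:
  "(\<Sum>u\<in>UNIV. (cmod (mono_sum d (u::'a::{finite,field})))\<^sup>2) =
     real (card (UNIV::'a set)) * (\<Sum>x\<in>UNIV - {0::'a}. real (card {y\<in>UNIV - {0}. x ^ d = y ^ d}))"
proof -
  let ?q = "card (UNIV::'a set)"
  let ?X = "UNIV - {0::'a}"
  have "complex_of_real (\<Sum>u\<in>UNIV. (cmod (mono_sum d (u::'a)))\<^sup>2)
      = (\<Sum>u\<in>UNIV. mono_sum d (u::'a) * cnj (mono_sum d u))"
    by (simp only: of_real_sum complex_norm_square)
  also have "\<dots> = (\<Sum>u\<in>UNIV. \<Sum>x\<in>?X. \<Sum>y\<in>?X. add_char (u * x ^ d) * cnj (add_char (u * y ^ d)))"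
    by (simp only: mono_sum_def cnj_sum sum_product)
  also have "\<dots> = (\<Sum>u\<in>UNIV. \<Sum>x\<in>?X. \<Sum>y\<in>?X. add_char ((x ^ d - y ^ d) * (u::'a)))"
  proof (intro sum.cong refl)
    fix u x y :: 'a
    have "(x ^ d - y ^ d) * u = u * x ^ d + - (u * y ^ d)" by (simp add: algebra_simps)
    thus "add_char (u * x ^ d) * cnj (add_char (u * y ^ d)) = add_char ((x ^ d - y ^ d) * u)"
      by (simp only: add_char_add add_char_uminus)
  qed
  also have "\<dots> = (\<Sum>x\<in>?X. \<Sum>y\<in>?X. \<Sum>u\<in>UNIV. add_char ((x ^ d - y ^ d) * (u::'a)))"
    by (subst sum.swap, rule sum.cong[OF refl], rule sum.swap)
  also have "\<dots> = (\<Sum>x\<in>?X. of_nat (card {y\<in>?X. x ^ d = y ^ d}) * of_nat ?q)"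
    by (simp add: sum_add_char_mult Int_def conj_commute)
  also have "\<dots> = complex_of_real (real ?q * (\<Sum>x\<in>?X. real (card {y\<in>?X. x ^ d = y ^ d})))"
    by (simp add: sum_distrib_left mult.commute)
  finally show ?thesis by (simp only: of_real_eq_iff)
qed

lemma sum_norm_mono_sum_le:
  assumes "d \<ge> 1"
  shows "(\<Sum>u\<in>UNIV. (cmod (mono_sum d (u::'a::{finite,field})))\<^sup>2)
           \<le> real (card (UNIV::'a set)) * real (card (UNIV::'a set) - 1) * real d"
proof -
  let ?X = "UNIV - {0::'a}"
  have "card {y\<in>?X. x ^ d = y ^ d} \<le> d" for x :: 'a
  proof -
    have "card {y\<in>?X. x ^ d = y ^ d} \<le> card {y. y ^ d = x ^ d}" by (rule card_mono) auto
    thus ?thesis using card_power_eq_le[OF assms, of "x ^ d"] by linarith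
  qed
  hence "(\<Sum>x\<in>?X. real (card {y\<in>?X. x ^ d = y ^ d})) \<le> (\<Sum>x\<in>?X. real d)"
    by (intro sum_mono) auto
  thus ?thesis
    unfolding sum_norm_mono_sum_eq by (simp add: card_nonzero_field mult.assoc mult_left_mono)
qed

text \<open>A pointwise bound without Weil's theorem: \<open>|mono_sum d u|\<close> is constant on the at least
  \<open>(q - 1)/d\<close> elements \<open>u z\<^sup>d\<close>, so the mean square bound \<open>q (q - 1) d\<close> gives \<open>q d\<^sup>2\<close>.\<close>

lemma norm_mono_sum_le:
  assumes "d \<ge> 1" "u \<noteq> 0"
  shows "(cmod (mono_sum d (u::'a::{finite,field})))\<^sup>2 \<le> real (card (UNIV::'a set)) * real d ^ 2"
proof -
  let ?q = "card (UNIV::'a set)"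
  let ?X = "UNIV - {0::'a}"
  let ?C = "(\<lambda>z. u * z ^ d) ` ?X"
  have "card ?X \<le> card (\<Union>v\<in>?C. {z. z ^ d = v / u})"
    using assms(2) by (intro card_mono) auto
  also have "\<dots> \<le> (\<Sum>v\<in>?C. card {z. z ^ d = v / u})" by (rule card_UN_le) simp
  also have "\<dots> \<le> card ?C * d" using sum_mono[OF card_power_eq_le[OF assms(1)]] by simp
  finally have card_C: "real (?q - 1) \<le> real (card ?C) * real d"
    by (simp add: card_nonzero_field flip: of_nat_mult)
  have "(\<Sum>v\<in>?C. (cmod (mono_sum d v))\<^sup>2) = (\<Sum>v\<in>?C. (cmod (mono_sum d u))\<^sup>2)"
  proof (rule sum.cong)
    fix v assume "v \<in> ?C"
    then obtain z where "z \<noteq> 0" "v = u * z ^ d" by blast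
    thus "(cmod (mono_sum d v))\<^sup>2 = (cmod (mono_sum d u))\<^sup>2" by (simp add: mono_sum_mult_power)
  qed simp
  hence "real (card ?C) * (cmod (mono_sum d u))\<^sup>2 = (\<Sum>v\<in>?C. (cmod (mono_sum d v))\<^sup>2)"
    by simp
  also have "\<dots> \<le> (\<Sum>v\<in>UNIV. (cmod (mono_sum d (v::'a)))\<^sup>2)" by (intro sum_mono2) auto
  also have "\<dots> \<le> real ?q * real (?q - 1) * real d" by (rule sum_norm_mono_sum_le[OF assms(1)])
  also have "\<dots> \<le> real ?q * (real (card ?C) * real d) * real d"
    using card_C by (intro mult_right_mono mult_left_mono) auto
  finally have "real (card ?C) * (cmod (mono_sum d u))\<^sup>2 \<le> real (card ?C) * (real ?q * real d ^ 2)"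
    by (simp add: power2_eq_square mult_ac)
  moreover have "card ?C > 0" by (auto simp: card_gt_0_iff intro: image_eqI[of _ _ 1])
  ultimately show ?thesis by simp
qed

section \<open>Counting solutions of diagonal systems with additive characters\<close>

definition vectors :: "nat \<Rightarrow> (nat \<Rightarrow> 'a::{finite,field}) set" where
  "vectors n = PiE {1..n} (\<lambda>_. UNIV)"

definition zero_vector :: "nat \<Rightarrow> nat \<Rightarrow> 'a::{finite,field}" where
  "zero_vector n = restrict (\<lambda>_. 0) {1..n}"

definition row_comb :: "nat \<Rightarrow> (nat \<Rightarrow> nat \<Rightarrow> 'a::{finite,field}) \<Rightarrow> (nat \<Rightarrow> 'a) \<Rightarrow> nat \<Rightarrow> 'a" where
  "row_comb n A \<xi> i = (\<Sum>j=1..n. \<xi> j * A j i)"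

definition diag_solutions ::
    "nat \<Rightarrow> nat set \<Rightarrow> (nat \<Rightarrow> nat \<Rightarrow> 'a::{finite,field}) \<Rightarrow> (nat \<Rightarrow> nat) \<Rightarrow> (nat \<Rightarrow> 'a) \<Rightarrow> (nat \<Rightarrow> 'a) set" where
  "diag_solutions n I A d w =
     {y \<in> PiE I (\<lambda>_. UNIV - {0}). \<forall>j\<in>{1..n}. (\<Sum>i\<in>I. A j i * y i ^ d i) = w j}"

lemma finite_vectors [simp]: "finite (vectors n)"
  by (simp add: vectors_def finite_PiE)

lemma card_vectors: "card (vectors n :: (nat \<Rightarrow> 'a::{finite,field}) set) = card (UNIV :: 'a set) ^ n"
  by (simp add: vectors_def card_PiE)

lemma vectors_eqI: "\<xi> \<in> vectors n \<Longrightarrow> \<eta> \<in> vectors n \<Longrightarrow> (\<And>j. j \<in> {1..n} \<Longrightarrow> \<xi> j = \<eta> j) \<Longrightarrow> \<xi> = \<eta>"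
  unfolding vectors_def by (rule PiE_ext) auto

lemma zero_vector_in_vectors [simp]: "zero_vector n \<in> vectors n"
  by (simp add: zero_vector_def vectors_def)

lemma row_comb_zero_vector [simp]: "row_comb n A (zero_vector n) i = 0"
  by (simp add: row_comb_def zero_vector_def)

lemma sum_add_char_vectors:
  "(\<Sum>\<xi>\<in>vectors n. add_char (\<Sum>j=1..n. \<xi> j * z j)) =
     of_bool (\<forall>j\<in>{1..n}. z j = 0) * of_nat (card (UNIV :: 'a set) ^ n)"
  for z :: "nat \<Rightarrow> 'a::{finite,field}"
proof -
  have "(\<Sum>\<xi>\<in>vectors n. add_char (\<Sum>j=1..n. \<xi> j * z j)) = (\<Sum>\<xi>\<in>vectors n. \<Prod>j=1..n. add_char (\<xi> j * z j))"
    by (simp add: add_char_sum)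
  also have "\<dots> = (\<Prod>j=1..n. \<Sum>x\<in>UNIV. add_char (z j * x))"
    unfolding vectors_def by (subst prod_sum_PiE[symmetric]) (auto simp: mult.commute)
  also have "\<dots> = (\<Prod>j=1..n. of_bool (z j = 0) * of_nat (card (UNIV :: 'a set)))"
    by (simp only: sum_add_char_mult)
  finally show ?thesis by (simp add: prod.distrib prod_of_bool)
qed

lemma card_diag_solutions_fourier:
  fixes A :: "nat \<Rightarrow> nat \<Rightarrow> 'a::{finite,field}"
  assumes I: "finite I"
  shows "of_nat (card (UNIV :: 'a set) ^ n) * of_nat (card (diag_solutions n I A d w)) =
    (\<Sum>\<xi>\<in>vectors n. add_char (- (\<Sum>j=1..n. \<xi> j * w j)) * (\<Prod>i\<in>I. mono_sum (d i) (row_comb n A \<xi> i)))"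
proof -
  let ?Y = "PiE I (\<lambda>_. UNIV - {0::'a})"
  let ?z = "\<lambda>y j. (\<Sum>i\<in>I. A j i * y i ^ d i) - w j"
  have expand: "add_char (- (\<Sum>j=1..n. \<xi> j * w j)) * (\<Prod>i\<in>I. mono_sum (d i) (row_comb n A \<xi> i)) =
      (\<Sum>y\<in>?Y. add_char (\<Sum>j=1..n. \<xi> j * ?z y j))" for \<xi>
  proof -
    have lin: "(\<Sum>j=1..n. \<xi> j * ?z y j) = - (\<Sum>j=1..n. \<xi> j * w j) + (\<Sum>i\<in>I. row_comb n A \<xi> i * y i ^ d i)" for y
      by (simp add: row_comb_def right_diff_distrib sum_distrib_left sum_distrib_right sum_subtractf
          mult.assoc sum.swap[of _ I])
    have "add_char (\<Sum>j=1..n. \<xi> j * ?z y j) =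
        add_char (- (\<Sum>j=1..n. \<xi> j * w j)) * (\<Prod>i\<in>I. add_char (row_comb n A \<xi> i * y i ^ d i))" for y
      using I by (simp only: lin add_char_add add_char_sum)
    moreover have "(\<Prod>i\<in>I. mono_sum (d i) (row_comb n A \<xi> i)) =
        (\<Sum>y\<in>?Y. \<Prod>i\<in>I. add_char (row_comb n A \<xi> i * y i ^ d i))"
      unfolding mono_sum_def by (rule prod_sum_PiE) (use I in auto)
    ultimately show ?thesis by (simp add: sum_distrib_left)
  qed
  have "(\<Sum>\<xi>\<in>vectors n. add_char (- (\<Sum>j=1..n. \<xi> j * w j)) * (\<Prod>i\<in>I. mono_sum (d i) (row_comb n A \<xi> i)))
      = (\<Sum>y\<in>?Y. \<Sum>\<xi>\<in>vectors n. add_char (\<Sum>j=1..n. \<xi> j * ?z y j))"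
    by (simp only: expand sum.swap[of _ "vectors n"])
  also have "\<dots> = (\<Sum>y\<in>?Y. of_bool (\<forall>j\<in>{1..n}. ?z y j = 0) * of_nat (card (UNIV :: 'a set) ^ n))"
    by (simp only: sum_add_char_vectors)
  also have "\<dots> = of_nat (card (diag_solutions n I A d w)) * of_nat (card (UNIV :: 'a set) ^ n)"
    using I by (simp add: diag_solutions_def finite_PiE Int_def conj_commute)
  finally show ?thesis by (simp add: mult.commute)
qed

lemma sum_add_char_vectors_diff:
  fixes \<xi> \<eta> :: "nat \<Rightarrow> 'a::{finite,field}"
  assumes "\<xi> \<in> vectors n" "\<eta> \<in> vectors n"
  shows "(\<Sum>w\<in>vectors n. add_char (\<Sum>j=1..n. w j * (\<eta> j - \<xi> j))) =
           of_bool (\<eta> = \<xi>) * of_nat (card (UNIV :: 'a set) ^ n)"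
proof -
  have "(\<forall>j\<in>{1..n}. \<eta> j - \<xi> j = 0) \<longleftrightarrow> \<eta> = \<xi>"
    using assms by (auto intro: vectors_eqI)
  thus ?thesis by (simp only: sum_add_char_vectors)
qed

lemma parseval_vectors:
  fixes c :: "(nat \<Rightarrow> 'a::{finite,field}) \<Rightarrow> complex"
  assumes U: "U \<subseteq> vectors n"
  shows "(\<Sum>w\<in>vectors n. (cmod (\<Sum>\<xi>\<in>U. add_char (- (\<Sum>j=1..n. \<xi> j * w j)) * c \<xi>))\<^sup>2) =
         real (card (UNIV :: 'a set) ^ n) * (\<Sum>\<xi>\<in>U. (cmod (c \<xi>))\<^sup>2)"
proof -
  let ?q = "card (UNIV :: 'a set)"
  let ?E = "\<lambda>w. (\<Sum>\<xi>\<in>U. add_char (- (\<Sum>j=1..n. \<xi> j * w j)) * c \<xi>)"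
  have fU: "finite U" using U finite_vectors by (rule finite_subset)
  have char_diff: "add_char (- (\<Sum>j=1..n. \<xi> j * w j)) * cnj (add_char (- (\<Sum>j=1..n. \<eta> j * w j)))
      = add_char (\<Sum>j=1..n. w j * (\<eta> j - \<xi> j))" for \<xi> \<eta> w :: "nat \<Rightarrow> 'a"
  proof -
    have "(\<Sum>j=1..n. w j * (\<eta> j - \<xi> j)) = - (\<Sum>j=1..n. \<xi> j * w j) + - (- (\<Sum>j=1..n. \<eta> j * w j))"
      by (simp add: right_diff_distrib sum_subtractf mult.commute)
    thus ?thesis by (simp only: add_char_add add_char_uminus)
  qed
  have "complex_of_real (\<Sum>w\<in>vectors n. (cmod (?E w))\<^sup>2) = (\<Sum>w\<in>vectors n. ?E w * cnj (?E w))"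
    by (simp only: of_real_sum complex_norm_square)
  also have "\<dots> = (\<Sum>w\<in>vectors n. \<Sum>\<xi>\<in>U. \<Sum>\<eta>\<in>U.
      (add_char (- (\<Sum>j=1..n. \<xi> j * w j)) * c \<xi>) * cnj (add_char (- (\<Sum>j=1..n. \<eta> j * w j)) * c \<eta>))"
    by (simp only: cnj_sum sum_product)
  also have "\<dots> = (\<Sum>w\<in>vectors n. \<Sum>\<xi>\<in>U. \<Sum>\<eta>\<in>U.
      c \<xi> * cnj (c \<eta>) * add_char (\<Sum>j=1..n. w j * (\<eta> j - \<xi> j)))"
    by (simp only: complex_cnj_mult char_diff[symmetric] mult_ac)
  also have "\<dots> = (\<Sum>\<xi>\<in>U. \<Sum>\<eta>\<in>U. c \<xi> * cnj (c \<eta>) * (\<Sum>w\<in>vectors n. add_char (\<Sum>j=1..n. w j * (\<eta> j - \<xi> j))))"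
    by (simp only: sum_distrib_left sum.swap[of _ "vectors n"])
  also have "\<dots> = (\<Sum>\<xi>\<in>U. \<Sum>\<eta>\<in>U. c \<xi> * cnj (c \<eta>) * (of_bool (\<eta> = \<xi>) * of_nat (?q ^ n)))"
    using U by (intro sum.cong refl) (simp only: sum_add_char_vectors_diff subsetD)
  also have "\<dots> = (\<Sum>\<xi>\<in>U. \<Sum>\<eta>\<in>U. if \<eta> = \<xi> then c \<xi> * cnj (c \<eta>) * of_nat (?q ^ n) else 0)"
    by (intro sum.cong refl) simp
  also have "\<dots> = (\<Sum>\<xi>\<in>U. c \<xi> * cnj (c \<xi>) * of_nat (?q ^ n))"
    using fU by simp
  also have "\<dots> = of_nat (?q ^ n) * (\<Sum>\<xi>\<in>U. c \<xi> * cnj (c \<xi>))"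
    by (simp add: sum_distrib_left mult_ac)
  also have "\<dots> = complex_of_real (real (?q ^ n) * (\<Sum>\<xi>\<in>U. (cmod (c \<xi>))\<^sup>2))"
    by (simp only: of_real_mult of_real_sum complex_norm_square of_real_of_nat_eq)
  finally show ?thesis by (simp only: of_real_eq_iff)
qed

text \<open>For \<open>w\<close> without solutions the term \<open>(q - 1)\<^bsup>|I|\<^esup>\<close> of \<open>\<xi> = 0\<close> in the Fourier expansion of the
  number of solutions is cancelled by the other terms, whose mean square over \<open>w\<close> is given by
  Parseval.\<close>

lemma card_unsolvable_diag_le:
  fixes A :: "nat \<Rightarrow> nat \<Rightarrow> 'a::{finite,field}" and d :: "nat \<Rightarrow> nat"
  assumes I: "finite I"
  shows "real (card {w\<in>vectors n. diag_solutions n I A d w = {}}) * real (card (UNIV::'a set) - 1) ^ (2 * card I)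
     \<le> real (card (UNIV :: 'a set) ^ n) *
        (\<Sum>\<xi>\<in>vectors n - {zero_vector n}. (cmod (\<Prod>i\<in>I. mono_sum (d i) (row_comb n A \<xi> i)))\<^sup>2)"
proof -
  let ?q = "card (UNIV :: 'a set)"
  let ?U = "vectors n - {zero_vector n} :: (nat \<Rightarrow> 'a) set"
  let ?P = "\<lambda>\<xi>. \<Prod>i\<in>I. mono_sum (d i) (row_comb n A \<xi> i)"
  let ?E = "\<lambda>w. \<Sum>\<xi>\<in>?U. add_char (- (\<Sum>j=1..n. \<xi> j * w j)) * ?P \<xi>"
  let ?B = "{w\<in>vectors n. diag_solutions n I A d w = {}}"
  have "of_nat (?q ^ n) * of_nat (card (diag_solutions n I A d w)) =
      add_char (- (\<Sum>j=1..n. zero_vector n j * w j)) * ?P (zero_vector n) + ?E w" for w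
    unfolding card_diag_solutions_fourier[OF I] by (subst sum.remove[of _ "zero_vector n"]) auto
  moreover have "(\<Sum>j=1..n. zero_vector n j * w j) = 0" for w :: "nat \<Rightarrow> 'a"
    by (simp add: zero_vector_def)
  ultimately have split: "of_nat (?q ^ n) * of_nat (card (diag_solutions n I A d w)) = of_nat (?q - 1) ^ card I + ?E w" for w
    by (simp add: mono_sum_0)
  have "?E w = - (of_nat (?q - 1) ^ card I)" if "w \<in> ?B" for w
    using split[of w] that by (simp add: eq_neg_iff_add_eq_0 add.commute)
  hence "cmod (?E w) = real (?q - 1) ^ card I" if "w \<in> ?B" for w
    using that by (simp add: norm_power)
  hence "(cmod (?E w))\<^sup>2 = real (?q - 1) ^ (2 * card I)" if "w \<in> ?B" for w
    using that by (simp add: power_mult[symmetric] mult.commute[of "card I" 2])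
  hence "real (card ?B) * real (?q - 1) ^ (2 * card I) = (\<Sum>w\<in>?B. (cmod (?E w))\<^sup>2)"
    by simp
  also have "\<dots> \<le> (\<Sum>w\<in>vectors n. (cmod (?E w))\<^sup>2)" by (intro sum_mono2) auto
  also have "\<dots> = real (?q ^ n) * (\<Sum>\<xi>\<in>?U. (cmod (?P \<xi>))\<^sup>2)" by (rule parseval_vectors) auto
  finally show ?thesis .
qed

lemma card_row_comb_zeros_less:
  fixes A :: "nat \<Rightarrow> nat \<Rightarrow> 'a::{finite,field}"
  assumes indep: "\<And>J. J \<subseteq> I \<Longrightarrow> card J = n \<Longrightarrow>
               bij_betw (\<lambda>\<xi>. restrict (row_comb n A \<xi>) J) (vectors n) (PiE J (\<lambda>_. UNIV))"
    and \<xi>: "\<xi> \<in> vectors n - {zero_vector n}"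
  shows "card {i\<in>I. row_comb n A \<xi> i = 0} < n"
proof (rule ccontr)
  assume "\<not> card {i\<in>I. row_comb n A \<xi> i = 0} < n"
  hence "n \<le> card {i\<in>I. row_comb n A \<xi> i = 0}" by simp
  then obtain J where J: "J \<subseteq> {i\<in>I. row_comb n A \<xi> i = 0}" "card J = n"
    by (rule obtain_subset_with_card_n)
  hence "restrict (row_comb n A \<xi>) J = restrict (row_comb n A (zero_vector n)) J"
    by (intro restrict_ext) auto
  moreover have "inj_on (\<lambda>\<xi>. restrict (row_comb n A \<xi>) J) (vectors n)"
    using indep[of J] J by (auto dest: bij_betw_imp_inj_on)
  ultimately have "\<xi> = zero_vector n"
    using \<xi> by (auto dest: inj_onD)
  thus False using \<xi> by simp
qed

lemma sum_prod_norm_mono_sum_le: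
  fixes A :: "nat \<Rightarrow> nat \<Rightarrow> 'a::{finite,field}"
  assumes bij: "bij_betw (\<lambda>\<xi>. restrict (row_comb n A \<xi>) J) (vectors n) (PiE J (\<lambda>_. UNIV))"
    and J: "finite J" "card J = n" and d: "\<And>i. i \<in> J \<Longrightarrow> 1 \<le> d i \<and> d i \<le> D"
  shows "(\<Sum>\<xi>\<in>vectors n. \<Prod>j\<in>J. (cmod (mono_sum (d j) (row_comb n A \<xi> j)))\<^sup>2)
           \<le> (real (card (UNIV::'a set)) * real (card (UNIV::'a set) - 1) * real D) ^ n"
proof -
  let ?q = "card (UNIV::'a set)"
  let ?D = "\<lambda>j u. (cmod (mono_sum (d j) (u::'a)))\<^sup>2"
  have "(\<Sum>\<xi>\<in>vectors n. \<Prod>j\<in>J. ?D j (row_comb n A \<xi> j)) =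
        (\<Sum>\<xi>\<in>vectors n. (\<lambda>u. \<Prod>j\<in>J. ?D j (u j)) (restrict (row_comb n A \<xi>) J))"
    by (intro sum.cong refl prod.cong) auto
  also have "\<dots> = (\<Sum>u\<in>PiE J (\<lambda>_. UNIV). \<Prod>j\<in>J. ?D j (u j))"
    by (rule sum.reindex_bij_betw[OF bij])
  also have "\<dots> = (\<Prod>j\<in>J. \<Sum>x\<in>UNIV. ?D j x)"
    by (rule prod_sum_PiE[symmetric]) (use J in auto)
  also have "\<dots> \<le> (\<Prod>j\<in>J. real ?q * real (?q - 1) * real D)"
  proof (rule prod_mono, rule conjI)
    fix j assume j: "j \<in> J"
    show "0 \<le> (\<Sum>x\<in>UNIV. ?D j x)" by (simp add: sum_nonneg)
    have "(\<Sum>x\<in>UNIV. ?D j x) \<le> real ?q * real (?q - 1) * real (d j)"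
      using d[OF j] by (intro sum_norm_mono_sum_le) auto
    also have "\<dots> \<le> real ?q * real (?q - 1) * real D"
      using d[OF j] by (intro mult_left_mono) auto
    finally show "(\<Sum>x\<in>UNIV. ?D j x) \<le> real ?q * real (?q - 1) * real D" .
  qed
  finally show ?thesis using J by simp
qed

text \<open>For \<open>\<xi> \<noteq> 0\<close>, complete the fewer than \<open>n\<close> indices where \<open>row_comb n A \<xi>\<close> vanishes to an
  \<open>n\<close>-set \<open>J\<close>; the factors outside \<open>J\<close> are bounded pointwise by \<open>norm_mono_sum_le\<close>, those in \<open>J\<close>
  are kept and summed over \<open>\<xi>\<close> afterwards.\<close>

lemma prod_norm_mono_sum_le:
  fixes A :: "nat \<Rightarrow> nat \<Rightarrow> 'a::{finite,field}"
  assumes I: "finite I" and nI: "n \<le> card I"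
    and d: "\<And>i. i \<in> I \<Longrightarrow> 1 \<le> d i \<and> d i \<le> D"
    and zeros: "card {i\<in>I. row_comb n A \<xi> i = 0} < n"
  shows "(\<Prod>i\<in>I. (cmod (mono_sum (d i) (row_comb n A \<xi> i)))\<^sup>2)
     \<le> (real (card (UNIV::'a set)) * real D ^ 2) ^ (card I - n) *
        (\<Sum>J | J \<subseteq> I \<and> card J = n. \<Prod>j\<in>J. (cmod (mono_sum (d j) (row_comb n A \<xi> j)))\<^sup>2)"
proof -
  let ?q = "card (UNIV::'a set)"
  let ?D = "\<lambda>i. (cmod (mono_sum (d i) (row_comb n A \<xi> i)))\<^sup>2"
  let ?Z = "{i\<in>I. row_comb n A \<xi> i = 0}"
  have "n - card ?Z \<le> card (I - ?Z)" using I nI by (subst card_Diff_subset) auto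
  then obtain K where K: "K \<subseteq> I - ?Z" "card K = n - card ?Z" "finite K"
    by (rule obtain_subset_with_card_n)
  let ?J = "?Z \<union> K"
  have "?Z \<inter> K = {}" using K by blast
  hence J: "?J \<subseteq> I" "card ?J = n"
    using K zeros I by (auto simp: card_Un_disjoint)
  have "(\<Prod>i\<in>I. ?D i) = (\<Prod>i\<in>I - ?J. ?D i) * (\<Prod>j\<in>?J. ?D j)"
    by (rule prod.subset_diff[OF J(1) I])
  also have "\<dots> \<le> (real ?q * real D ^ 2) ^ (card I - n) * (\<Prod>j\<in>?J. ?D j)"
  proof (rule mult_right_mono)
    have "(\<Prod>i\<in>I - ?J. ?D i) \<le> (\<Prod>i\<in>I - ?J. real ?q * real D ^ 2)"
    proof (rule prod_mono, rule conjI)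
      fix i assume i: "i \<in> I - ?J"
      have "?D i \<le> real ?q * real (d i) ^ 2"
        using d[of i] i by (intro norm_mono_sum_le) auto
      also have "\<dots> \<le> real ?q * real D ^ 2"
        using d[of i] i by (intro mult_left_mono power_mono) auto
      finally show "?D i \<le> real ?q * real D ^ 2" .
    qed simp
    also have "\<dots> = (real ?q * real D ^ 2) ^ (card I - n)"
      using I J by (simp add: card_Diff_subset finite_subset)
    finally show "(\<Prod>i\<in>I - ?J. ?D i) \<le> (real ?q * real D ^ 2) ^ (card I - n)" .
  qed (simp add: prod_nonneg)
  also have "\<dots> \<le> (real ?q * real D ^ 2) ^ (card I - n) * (\<Sum>J | J \<subseteq> I \<and> card J = n. \<Prod>j\<in>J. ?D j)"
    using J I by (intro mult_left_mono member_le_sum[of ?J]) (auto intro: prod_nonneg)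
  finally show ?thesis .
qed

lemma sum_norm_prod_mono_sum_le:
  fixes A :: "nat \<Rightarrow> nat \<Rightarrow> 'a::{finite,field}" and D :: nat
  assumes I: "finite I" and nI: "n \<le> card I"
    and d: "\<And>i. i \<in> I \<Longrightarrow> 1 \<le> d i \<and> d i \<le> D"
    and indep: "\<And>J. J \<subseteq> I \<Longrightarrow> card J = n \<Longrightarrow>
               bij_betw (\<lambda>\<xi>. restrict (row_comb n A \<xi>) J) (vectors n) (PiE J (\<lambda>_. UNIV))"
  shows "(\<Sum>\<xi>\<in>vectors n - {zero_vector n}. (cmod (\<Prod>i\<in>I. mono_sum (d i) (row_comb n A \<xi> i)))\<^sup>2)
     \<le> (real (card (UNIV::'a set)) * real D ^ 2) ^ (card I - n) * real (card I choose n)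
        * (real (card (UNIV::'a set)) * real (card (UNIV::'a set) - 1) * real D) ^ n"
proof -
  let ?q = "card (UNIV::'a set)"
  let ?c = "(real ?q * real D ^ 2) ^ (card I - n)"
  let ?D = "\<lambda>i \<xi>. (cmod (mono_sum (d i) (row_comb n A \<xi> i)))\<^sup>2"
  let ?Js = "{J. J \<subseteq> I \<and> card J = n}"
  have "(\<Sum>\<xi>\<in>vectors n - {zero_vector n}. (cmod (\<Prod>i\<in>I. mono_sum (d i) (row_comb n A \<xi> i)))\<^sup>2)
      = (\<Sum>\<xi>\<in>vectors n - {zero_vector n}. \<Prod>i\<in>I. ?D i \<xi>)"
    by (simp add: prod_norm[symmetric] prod_power_distrib)
  also have "\<dots> \<le> (\<Sum>\<xi>\<in>vectors n - {zero_vector n}. ?c * (\<Sum>J\<in>?Js. \<Prod>j\<in>J. ?D j \<xi>))"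
    using card_row_comb_zeros_less[OF indep]
    by (intro sum_mono prod_norm_mono_sum_le[OF I nI d]) auto
  also have "\<dots> \<le> (\<Sum>\<xi>\<in>vectors n. ?c * (\<Sum>J\<in>?Js. \<Prod>j\<in>J. ?D j \<xi>))"
    by (intro sum_mono2) (auto intro!: mult_nonneg_nonneg sum_nonneg prod_nonneg)
  also have "\<dots> = ?c * (\<Sum>J\<in>?Js. \<Sum>\<xi>\<in>vectors n. \<Prod>j\<in>J. ?D j \<xi>)"
    by (simp add: sum_distrib_left sum.swap[of _ "vectors n"])
  also have "\<dots> \<le> ?c * (\<Sum>J\<in>?Js. (real ?q * real (?q - 1) * real D) ^ n)"
    using I d indep by (intro mult_left_mono sum_mono sum_prod_norm_mono_sum_le) (auto intro: finite_subset)
  also have "\<dots> = ?c * real (card I choose n) * (real ?q * real (?q - 1) * real D) ^ n"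
    using n_subsets[OF I, of n] by simp
  finally show ?thesis .
qed

section \<open>A Bezout-type bound for triangular power systems\<close>

definition monom_eval :: "nat \<Rightarrow> (nat \<Rightarrow> nat) \<Rightarrow> (nat \<Rightarrow> 'a::comm_ring_1) \<Rightarrow> 'a" where
  "monom_eval n \<alpha> x = (\<Prod>i=1..n. x i ^ \<alpha> i)"

lemma monom_eval_add: "monom_eval n (\<lambda>i. \<alpha> i + \<beta> i) x = monom_eval n \<alpha> x * monom_eval n \<beta> x"
  by (simp add: monom_eval_def power_add prod.distrib)

lemma monom_eval_0 [simp]: "monom_eval n (\<lambda>_. 0) x = 1"
  by (simp add: monom_eval_def)

lemma monom_eval_var:
  assumes "k \<in> {1..n}"
  shows "monom_eval n (\<lambda>i. if i = k then 1 else 0) x = x k"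
  using assms by (simp add: monom_eval_def if_distrib[of "\<lambda>e. x _ ^ e"] cong: if_cong)

lemma monom_eval_split:
  assumes "k \<in> {1..n}" "m \<le> \<alpha> k"
  shows "monom_eval n \<alpha> x = monom_eval n (\<alpha>(k := \<alpha> k - m)) x * x k ^ m"
proof -
  have "monom_eval n \<alpha> x = (\<Prod>i=1..n. x i ^ (\<alpha>(k := \<alpha> k - m)) i * (if i = k then x k ^ m else 1))"
    unfolding monom_eval_def
    by (intro prod.cong refl) (use assms(2) in \<open>auto simp flip: power_add\<close>)
  also have "\<dots> = monom_eval n (\<alpha>(k := \<alpha> k - m)) x * x k ^ m"
    using assms(1) by (simp add: monom_eval_def prod.distrib)
  finally show ?thesis .
qed

lemma sum_fun_upd_add:
  fixes \<alpha> :: "nat \<Rightarrow> nat"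
  assumes "k \<in> {1..n}"
  shows "(\<Sum>i=1..n. (\<alpha>(k := v)) i) + \<alpha> k = (\<Sum>i=1..n. \<alpha> i) + (v::nat)"
proof -
  have remove: "(\<Sum>i=1..n. f i) = f k + (\<Sum>i\<in>{1..n} - {k}. f i)" for f :: "nat \<Rightarrow> nat"
    using assms by (intro sum.remove) auto
  have "(\<Sum>i\<in>{1..n} - {k}. (\<alpha>(k := v)) i) = (\<Sum>i\<in>{1..n} - {k}. \<alpha> i)"
    by (intro sum.cong) auto
  thus ?thesis using remove[of "\<alpha>(k := v)"] remove[of \<alpha>] by simp
qed

lemma poly_indicator_field:
  "poly (1 - [:- a, 1:] ^ (card (UNIV :: 'a set) - 1)) y = of_bool (y = (a::'a::{finite,field}))"
proof (cases "y = a")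
  case True
  thus ?thesis using card_UNIV_field_ge_2[where 'a='a] by (simp add: power_0_left)
next
  case False
  thus ?thesis using power_card_minus_1_field[of "y - a"] by simp
qed

text \<open>On the solution set \<open>Z\<close> of a system expressing each \<open>x\<^sub>k\<^sup>d\<^sup>k\<close> through monomials of total degree
  \<open>< d\<^sub>k\<close>, every monomial, and hence every function on \<open>Z\<close>, is a combination of the \<open>\<Prod>\<^sub>k d\<^sub>k\<close>
  reduced monomials \<open>x\<^sup>\<beta>\<close>, \<open>\<beta>\<^sub>k < d\<^sub>k\<close>; comparing dimensions gives \<open>|Z| \<le> \<Prod>\<^sub>k d\<^sub>k\<close>.\<close>

locale power_reduction =
  fixes n :: nat and d :: "nat \<Rightarrow> nat" and Z :: "(nat \<Rightarrow> 'a::{finite,field}) set"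
    and c0 :: "nat \<Rightarrow> 'a" and lam :: "nat \<Rightarrow> nat \<Rightarrow> 'a" and e :: "nat \<Rightarrow> nat \<Rightarrow> nat"
  assumes d_pos: "\<And>k. k \<in> {1..n} \<Longrightarrow> d k \<ge> 1"
    and e_small: "\<And>k j. k \<in> {1..n} \<Longrightarrow> j \<in> {1..n} \<Longrightarrow> (\<Sum>i=1..n. e j i) < d k"
    and Z_vectors: "Z \<subseteq> vectors n"
    and reduce: "\<And>x k. x \<in> Z \<Longrightarrow> k \<in> {1..n} \<Longrightarrow>
               x k ^ d k = c0 k + (\<Sum>j=1..n. lam k j * monom_eval n (e j) x)"
begin

definition reduced_exps :: "(nat \<Rightarrow> nat) set" where
  "reduced_exps = PiE {1..n} (\<lambda>i. {..<d i})"

definition reducible :: "((nat \<Rightarrow> 'a) \<Rightarrow> 'a) \<Rightarrow> bool" where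
  "reducible g \<longleftrightarrow> (\<exists>c. \<forall>x\<in>Z. g x = (\<Sum>\<beta>\<in>reduced_exps. c \<beta> * monom_eval n \<beta> x))"

lemma finite_reduced_exps [simp]: "finite reduced_exps"
  by (simp add: reduced_exps_def finite_PiE)

lemma finite_Z: "finite Z"
  using Z_vectors finite_vectors by (rule finite_subset)

lemma reducible_cong: "reducible g \<Longrightarrow> (\<And>x. x \<in> Z \<Longrightarrow> h x = g x) \<Longrightarrow> reducible h"
  unfolding reducible_def by auto

lemma reducible_add: "reducible g \<Longrightarrow> reducible h \<Longrightarrow> reducible (\<lambda>x. g x + h x)"
proof -
  assume "reducible g" "reducible h"
  then obtain c c' where "\<forall>x\<in>Z. g x = (\<Sum>\<beta>\<in>reduced_exps. c \<beta> * monom_eval n \<beta> x)"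
    "\<forall>x\<in>Z. h x = (\<Sum>\<beta>\<in>reduced_exps. c' \<beta> * monom_eval n \<beta> x)"
    unfolding reducible_def by blast
  thus ?thesis unfolding reducible_def
    by (intro exI[of _ "\<lambda>\<beta>. c \<beta> + c' \<beta>"]) (simp add: distrib_right sum.distrib)
qed

lemma reducible_smult: "reducible g \<Longrightarrow> reducible (\<lambda>x. a * g x)"
proof -
  assume "reducible g"
  then obtain c where "\<forall>x\<in>Z. g x = (\<Sum>\<beta>\<in>reduced_exps. c \<beta> * monom_eval n \<beta> x)"
    unfolding reducible_def by blast
  thus ?thesis unfolding reducible_def
    by (intro exI[of _ "\<lambda>\<beta>. a * c \<beta>"]) (simp add: sum_distrib_left mult.assoc)
qed

lemma reducible_sum: "finite J \<Longrightarrow> (\<And>j. j \<in> J \<Longrightarrow> reducible (f j)) \<Longrightarrow> reducible (\<lambda>x. \<Sum>j\<in>J. f j x)"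
proof (induction J rule: finite_induct)
  case empty thus ?case unfolding reducible_def by (intro exI[of _ "\<lambda>_. 0"]) simp
next
  case (insert j J) thus ?case using reducible_add[of "f j"] by simp
qed

text \<open>Induction on the total degree: a monomial outside the reduced range contains a factor
  \<open>x\<^sub>k\<^sup>d\<^sup>k\<close>, which \<open>reduce\<close> replaces by terms of strictly smaller total degree.\<close>

lemma reducible_monom_eval: "reducible (monom_eval n \<alpha>)"
proof (induction "\<Sum>i=1..n. \<alpha> i" arbitrary: \<alpha> rule: less_induct)
  case less
  show ?case
  proof (cases "\<forall>k\<in>{1..n}. \<alpha> k < d k")
    case True
    let ?\<beta> = "restrict \<alpha> {1..n}"
    have "?\<beta> \<in> reduced_exps" using True by (auto simp: reduced_exps_def)
    hence delta: "monom_eval n \<alpha> x = (\<Sum>\<beta>\<in>reduced_exps. (if \<beta> = ?\<beta> then 1 else 0) * monom_eval n \<beta> x)"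
      for x :: "nat \<Rightarrow> 'a"
      by (simp add: if_distrib[of "\<lambda>c. c * _"] monom_eval_def cong: if_cong)
    thus ?thesis
      unfolding reducible_def by (intro exI[of _ "\<lambda>\<beta>. if \<beta> = ?\<beta> then 1 else 0"] ballI delta)
  next
    case False
    then obtain k where k: "k \<in> {1..n}" "d k \<le> \<alpha> k" by (auto simp: not_less)
    let ?a = "\<alpha>(k := \<alpha> k - d k)"
    have deg: "(\<Sum>i=1..n. ?a i) + d k = (\<Sum>i=1..n. \<alpha> i)"
      using sum_fun_upd_add[OF k(1), of \<alpha> "\<alpha> k - d k"] k(2) by simp
    have "reducible (monom_eval n ?a)"
      using deg d_pos[OF k(1)] by (intro less) linarith
    moreover have "reducible (monom_eval n (\<lambda>i. ?a i + e j i))" if "j \<in> {1..n}" for j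
      using deg e_small[OF k(1) that] by (intro less) (simp add: sum.distrib)
    ultimately have "reducible (\<lambda>x. c0 k * monom_eval n ?a x + (\<Sum>j=1..n. lam k j * monom_eval n (\<lambda>i. ?a i + e j i) x))"
      by (intro reducible_add reducible_smult reducible_sum) auto
    thus ?thesis
    proof (rule reducible_cong)
      fix x assume x: "x \<in> Z"
      have "monom_eval n \<alpha> x = monom_eval n ?a x * (c0 k + (\<Sum>j=1..n. lam k j * monom_eval n (e j) x))"
        by (simp add: monom_eval_split[where m="d k" and \<alpha>=\<alpha>, OF k] reduce[OF x k(1)])
      thus "monom_eval n \<alpha> x = c0 k * monom_eval n ?a x + (\<Sum>j=1..n. lam k j * monom_eval n (\<lambda>i. ?a i + e j i) x)"
        unfolding monom_eval_add[of n ?a] by (simp add: distrib_left sum_distrib_left mult_ac)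
    qed
  qed
qed

lemma reducible_mult_monom_eval: "reducible g \<Longrightarrow> reducible (\<lambda>x. g x * monom_eval n \<gamma> x)"
proof -
  assume "reducible g"
  then obtain c where c: "\<forall>x\<in>Z. g x = (\<Sum>\<beta>\<in>reduced_exps. c \<beta> * monom_eval n \<beta> x)"
    unfolding reducible_def by blast
  have "reducible (\<lambda>x. \<Sum>\<beta>\<in>reduced_exps. c \<beta> * monom_eval n (\<lambda>i. \<beta> i + \<gamma> i) x)"
    by (intro reducible_sum reducible_smult reducible_monom_eval) simp
  thus ?thesis
    by (rule reducible_cong) (simp add: c monom_eval_add sum_distrib_right mult.assoc)
qed

lemma reducible_mult_poly: "k \<in> {1..n} \<Longrightarrow> reducible g \<Longrightarrow> reducible (\<lambda>x. g x * poly p (x k))"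
proof (induction p arbitrary: g)
  case 0 thus ?case unfolding reducible_def by (intro exI[of _ "\<lambda>_. 0"]) simp
next
  case (pCons a p)
  have "reducible (\<lambda>x. g x * monom_eval n (\<lambda>i. if i = k then 1 else 0) x)"
    using pCons.prems by (intro reducible_mult_monom_eval)
  hence "reducible (\<lambda>x. (g x * x k) * poly p (x k))"
    using pCons by (intro pCons.IH) (simp_all add: monom_eval_var)
  hence "reducible (\<lambda>x. a * g x + (g x * x k) * poly p (x k))"
    using pCons.prems by (intro reducible_add reducible_smult)
  thus ?case by (rule reducible_cong) (simp add: algebra_simps)
qed

lemma reducible_prod_poly: "K \<subseteq> {1..n} \<Longrightarrow> reducible (\<lambda>x. \<Prod>k\<in>K. poly (P k) (x k))"
proof (induction K rule: infinite_finite_induct)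
  case (infinite K) thus ?case using finite_subset by blast
next
  case empty
  show ?case by (rule reducible_cong[OF reducible_monom_eval[of "\<lambda>_. 0"]]) simp
next
  case (insert k K)
  hence "reducible (\<lambda>x. (\<Prod>k\<in>K. poly (P k) (x k)) * poly (P k) (x k))"
    by (intro reducible_mult_poly) auto
  thus ?case using insert by (simp add: mult.commute)
qed

lemma reducible_all: "reducible f"
proof -
  let ?P = "\<lambda>z k. 1 - [:- z k, 1:] ^ (card (UNIV :: 'a set) - 1)"
  have "reducible (\<lambda>x. \<Sum>z\<in>Z. f z * (\<Prod>k\<in>{1..n}. poly (?P z k) (x k)))"
    by (intro reducible_sum[OF finite_Z] reducible_smult reducible_prod_poly) auto
  thus ?thesis
  proof (rule reducible_cong)
    fix x assume x: "x \<in> Z"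
    have "(\<Prod>k\<in>{1..n}. poly (?P z k) (x k)) = of_bool (x = z)" if z: "z \<in> Z" for z
    proof -
      have "x = z \<longleftrightarrow> (\<forall>k\<in>{1..n}. x k = z k)"
        using x z Z_vectors by (auto intro: vectors_eqI)
      thus ?thesis by (simp only: poly_indicator_field prod_of_bool finite_atLeastAtMost)
    qed
    thus "f x = (\<Sum>z\<in>Z. f z * (\<Prod>k\<in>{1..n}. poly (?P z k) (x k)))"
      using x finite_Z by (simp cong: sum.cong)
  qed
qed

lemma card_le_prod_degrees: "card Z \<le> (\<Prod>k=1..n. d k)"
proof -
  let ?q = "card (UNIV :: 'a set)"
  let ?eval = "\<lambda>c. restrict (\<lambda>x. \<Sum>\<beta>\<in>reduced_exps. c \<beta> * monom_eval n \<beta> x) Z"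
  have "PiE Z (\<lambda>_. UNIV) \<subseteq> ?eval ` PiE reduced_exps (\<lambda>_. UNIV)"
  proof
    fix f assume f: "f \<in> PiE Z (\<lambda>_. (UNIV :: 'a set))"
    obtain c where c: "\<forall>x\<in>Z. f x = (\<Sum>\<beta>\<in>reduced_exps. c \<beta> * monom_eval n \<beta> x)"
      using reducible_all[of f] unfolding reducible_def by blast
    have "?eval (restrict c reduced_exps) = f"
      using f c by (intro PiE_ext[of _ Z "\<lambda>_. UNIV"]) auto
    thus "f \<in> ?eval ` PiE reduced_exps (\<lambda>_. UNIV)"
      by (intro image_eqI[of _ ?eval "restrict c reduced_exps"]) auto
  qed
  hence "card (PiE Z (\<lambda>_. (UNIV :: 'a set))) \<le> card (?eval ` PiE reduced_exps (\<lambda>_. UNIV))"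
    by (intro card_mono finite_imageI) (simp_all add: finite_PiE)
  also have "\<dots> \<le> card (PiE reduced_exps (\<lambda>_. (UNIV :: 'a set)))"
    by (rule card_image_le) (simp add: finite_PiE)
  finally have "card (PiE Z (\<lambda>_. (UNIV :: 'a set))) \<le> card (PiE reduced_exps (\<lambda>_. (UNIV :: 'a set)))" .
  hence "?q ^ card Z \<le> ?q ^ card reduced_exps"
    using finite_Z by (simp add: card_PiE)
  hence "card Z \<le> card reduced_exps"
    using card_UNIV_field_ge_2[where 'a='a] by (simp add: power_le_imp_le_exp)
  also have "card reduced_exps = (\<Prod>k=1..n. d k)" by (simp add: reduced_exps_def card_PiE)
  finally show ?thesis .
qed

end

section \<open>Consequences of hypothesis (H)\<close>

lemma hyp_H_kernel:
  fixes A :: "nat \<Rightarrow> nat \<Rightarrow> 'a::field"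
  assumes H: "hyp_H n t A" and f: "inj_on f {0..<n}" "f ` {0..<n} \<subseteq> {1..t}"
    and z: "\<And>k. k < n \<Longrightarrow> (\<Sum>j=1..n. \<xi> j * A j (f k)) = 0"
  shows "\<forall>j\<in>{1..n}. \<xi> j = 0"
proof -
  let ?M = "mat n n (\<lambda>(r, k). A (r + 1) (f k))"
  let ?v = "vec n (\<lambda>r. \<xi> (r + 1))"
  have M: "?M \<in> carrier_mat n n" by simp
  have "vec_space.rank n ?M = n" using H f unfolding hyp_H_def mat_rank_def by simp
  hence "det (transpose_mat ?M) \<noteq> 0"
    using vec_space.det_rank_iff[OF M] det_transpose[OF M] by simp
  hence "\<forall>v \<in> carrier_vec n. v = 0\<^sub>v n \<or> transpose_mat ?M *\<^sub>v v \<noteq> 0\<^sub>v n"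
    using det_0_iff_vec_prod_zero_field[of "transpose_mat ?M" n] by auto
  moreover have "?v \<in> carrier_vec n" by simp
  moreover have "transpose_mat ?M *\<^sub>v ?v = 0\<^sub>v n"
  proof (rule eq_vecI)
    fix k assume "k < dim_vec (0\<^sub>v n :: 'a vec)"
    hence k: "k < n" by simp
    have "(\<Sum>r<n. A (r + 1) (f k) * \<xi> (r + 1)) = (\<Sum>j=1..n. \<xi> j * A j (f k))"
      by (simp add: sum.atLeast1_atMost_eq mult.commute)
    thus "(transpose_mat ?M *\<^sub>v ?v) $ k = 0\<^sub>v n $ k"
      using k z[OF k] by (simp add: mult_mat_vec_def scalar_prod_def atLeast0LessThan)
  qed simp
  ultimately have "?v = 0\<^sub>v n" by blast
  show ?thesis
  proof
    fix j assume j: "j \<in> {1..n}"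
    have "\<xi> j = ?v $ (j - 1)" using j by (subst index_vec) auto
    also have "\<dots> = 0" using j by (subst \<open>?v = 0\<^sub>v n\<close>, intro index_zero_vec) auto
    finally show "\<xi> j = 0" .
  qed
qed

lemma hyp_H_bij_restrict:
  fixes A :: "nat \<Rightarrow> nat \<Rightarrow> 'a::{finite,field}"
  assumes H: "hyp_H n t A" and J: "J \<subseteq> {1..t}" "card J = n"
  shows "bij_betw (\<lambda>\<xi>. restrict (row_comb n A \<xi>) J) (vectors n) (PiE J (\<lambda>_. UNIV))"
proof -
  have fJ: "finite J" using J finite_subset by blast
  obtain f where "bij_betw f {0..<n} J" using ex_bij_betw_nat_finite[OF fJ] J by blast
  hence f: "inj_on f {0..<n}" "f ` {0..<n} = J" by (auto simp: bij_betw_def)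
  have inj: "inj_on (\<lambda>\<xi>. restrict (row_comb n A \<xi>) J) (vectors n)"
  proof (rule inj_onI)
    fix \<xi> \<eta> assume \<xi>: "\<xi> \<in> vectors n" and \<eta>: "\<eta> \<in> vectors n"
      and eq: "restrict (row_comb n A \<xi>) J = restrict (row_comb n A \<eta>) J"
    have "(\<Sum>j=1..n. (\<xi> j - \<eta> j) * A j (f k)) = 0" if "k < n" for k
    proof -
      have "f k \<in> J" using f that by auto
      hence "row_comb n A \<xi> (f k) = row_comb n A \<eta> (f k)" using fun_cong[OF eq, of "f k"] by simp
      thus ?thesis by (simp add: row_comb_def left_diff_distrib sum_subtractf)
    qed
    hence "\<forall>j\<in>{1..n}. \<xi> j - \<eta> j = 0" using f J by (intro hyp_H_kernel[OF H]) auto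
    thus "\<xi> = \<eta>" using \<xi> \<eta> by (auto intro: vectors_eqI)
  qed
  have "card ((\<lambda>\<xi>. restrict (row_comb n A \<xi>) J) ` vectors n) = card (PiE J (\<lambda>_. (UNIV :: 'a set)))"
    using card_image[OF inj] J fJ by (simp add: card_vectors card_PiE)
  hence "(\<lambda>\<xi>. restrict (row_comb n A \<xi>) J) ` vectors n = PiE J (\<lambda>_. UNIV)"
    using fJ by (intro card_subset_eq) (auto simp: finite_PiE)
  thus ?thesis using inj by (simp add: bij_betw_def)
qed

lemma hyp_H_left_inverse:
  fixes A :: "nat \<Rightarrow> nat \<Rightarrow> 'a::{finite,field}"
  assumes H: "hyp_H n t A" and nt: "n \<le> t"
  obtains \<Lambda> where "\<And>k i. k \<in> {1..n} \<Longrightarrow> i \<in> {1..n} \<Longrightarrow> row_comb n A (\<Lambda> k) i = of_bool (i = k)"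
proof -
  have bij: "bij_betw (\<lambda>\<xi>. restrict (row_comb n A \<xi>) {1..n}) (vectors n) (PiE {1..n} (\<lambda>_. UNIV))"
    using nt by (intro hyp_H_bij_restrict[OF H]) auto
  have "\<exists>\<xi>. \<forall>i\<in>{1..n}. row_comb n A \<xi> i = of_bool (i = k)" for k
  proof -
    have "restrict (\<lambda>i. of_bool (i = k)) {1..n} \<in> (\<lambda>\<xi>. restrict (row_comb n A \<xi>) {1..n}) ` vectors n"
      using bij_betw_imp_surj_on[OF bij] by simp
    then obtain \<xi> where "restrict (\<lambda>i. of_bool (i = k)) {1..n} = restrict (row_comb n A \<xi>) {1..n}"
      by blast
    thus ?thesis by (metis restrict_apply')
  qed
  then obtain \<Lambda> where "\<And>k. \<forall>i\<in>{1..n}. row_comb n A (\<Lambda> k) i = of_bool (i = k)" by metis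
  thus ?thesis using that by blast
qed

lemma power_bound_of_counts:
  fixes q D B C :: real and n k :: nat
  assumes q: "q \<ge> 2" and D: "D \<ge> 1"
    and fibres: "(q - 1) ^ n \<le> B * D ^ n"
    and fourier: "B * (q - 1) ^ (2 * (n + k)) \<le> q ^ n * ((q * D\<^sup>2) ^ k * C * (q * (q - 1) * D) ^ n)"
    and C: "0 \<le> C" "C \<le> 2 ^ (n + k)"
  shows "q ^ k \<le> 16 ^ (n + k) * D ^ (2 * (n + k))"
proof -
  let ?m = "n + k"
  have "(q - 1) ^ (n + 2 * ?m) = (q - 1) ^ n * (q - 1) ^ (2 * ?m)" by (rule power_add)
  also have "\<dots> \<le> D ^ n * (B * (q - 1) ^ (2 * ?m))"
    using fibres q by (simp add: mult_right_mono mult.commute mult.left_commute)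
  also have "\<dots> \<le> D ^ n * (q ^ n * ((q * D\<^sup>2) ^ k * 2 ^ ?m * (q * q * D) ^ n))"
    using fourier q D C
    by (intro mult_left_mono order.trans[OF fourier] mult_mono power_mono mult_right_mono) auto
  also have "\<dots> = 2 ^ ?m * (D ^ n * D ^ n * (D\<^sup>2) ^ k) * (q ^ k * q ^ n * q ^ n * q ^ n)"
    by (simp add: power_mult_distrib mult_ac)
  also have "\<dots> = 2 ^ ?m * D ^ (2 * ?m) * q ^ (k + 3 * n)"
  proof -
    have "2 * ?m = n + n + 2 * k" "k + 3 * n = k + n + n + n" by simp_all
    thus ?thesis by (simp only: power_add power_mult mult_ac) (simp add: power_mult[symmetric] mult.commute)
  qed
  finally have upper: "(q - 1) ^ (n + 2 * ?m) \<le> 2 ^ ?m * D ^ (2 * ?m) * q ^ (k + 3 * n)" .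
  have "q ^ k * q ^ (k + 3 * n) = q ^ (n + 2 * ?m)"
    by (simp add: ac_simps flip: power_add)
  also have "\<dots> \<le> 2 ^ (n + 2 * ?m) * (q - 1) ^ (n + 2 * ?m)"
    using power_mono[of "q / 2" "q - 1" "n + 2 * ?m"] q by (simp add: field_simps)
  also have "\<dots> \<le> (2 ^ (n + 2 * ?m) * 2 ^ ?m * D ^ (2 * ?m)) * q ^ (k + 3 * n)"
    using upper by (simp add: mult_left_mono mult.assoc)
  finally have q_k: "q ^ k \<le> 2 ^ (n + 2 * ?m) * 2 ^ ?m * D ^ (2 * ?m)"
    using q by simp
  have "(2::real) ^ (n + 2 * ?m) * 2 ^ ?m = 2 ^ (n + 3 * ?m)"
    by (simp flip: power_add)
  also have "\<dots> \<le> 2 ^ (4 * ?m)" by (intro power_increasing) auto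
  also have "\<dots> = 16 ^ ?m" by (simp only: power_mult) simp
  finally have "2 ^ (n + 2 * ?m) * 2 ^ ?m * D ^ (2 * ?m) \<le> 16 ^ ?m * D ^ (2 * ?m)"
    using D by (intro mult_right_mono) auto
  with q_k show ?thesis by linarith
qed

lemma large_field_contradiction:
  fixes q D :: real and n t :: nat
  assumes D: "D \<ge> 1" and n: "n \<ge> 1" and t: "2 * n + 2 \<le> t"
    and q_big: "q > (30 * real n * D) powr ((2 * real t + 2) / (real t - 2 * real n))"
    and q_le: "q ^ (t - 2 * n) \<le> 16 ^ t * D ^ (2 * t)"
  shows False
proof -
  let ?X = "30 * real n * D"
  have X: "?X \<ge> 30 * D" using n D by simp
  have k: "real t - 2 * real n = real (t - 2 * n)" "real (t - 2 * n) > 0" using t by auto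
  have "?X ^ (2 * t + 2) = ?X powr real (2 * t + 2)"
    using X D by (intro powr_realpow[symmetric]) linarith
  also have "\<dots> = (?X powr ((2 * real t + 2) / (real t - 2 * real n))) powr real (t - 2 * n)"
    using k by (simp add: powr_powr add.commute)
  also have "\<dots> < q powr real (t - 2 * n)"
    using q_big k(2) by (intro powr_less_mono2) auto
  also have "\<dots> = q ^ (t - 2 * n)"
    using q_big X D by (intro powr_realpow) (smt (verit) powr_ge_zero)
  also have "\<dots> \<le> 16 ^ t * D ^ (2 * t)" by (rule q_le)
  also have "\<dots> \<le> 900 ^ t * D ^ (2 * t)" using D by (intro mult_right_mono power_mono) auto
  also have "\<dots> = (30 * D) ^ (2 * t)" by (simp add: power_mult_distrib power_mult)
  also have "\<dots> \<le> ?X ^ (2 * t)" using D X by (intro power_mono) auto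
  also have "\<dots> \<le> ?X ^ (2 * t + 2)" by (intro power_increasing) (use X D in linarith)+
  finally show False by simp
qed

section \<open>Markoff--Hurwitz-type systems\<close>

text \<open>\<open>rhs x\<close> is the right-hand side left for the diagonal system in \<open>x\<^sub>n\<^sub>+\<^sub>1, \<dots>, x\<^sub>t\<close> once the
  first \<open>n\<close> variables are fixed to \<open>x\<close>.\<close>

locale mh_system =
  fixes t n :: nat and d :: "nat \<Rightarrow> nat" and c :: "nat \<Rightarrow> nat \<Rightarrow> nat"
    and A :: "nat \<Rightarrow> nat \<Rightarrow> 'a::{finite,field}" and a b :: "nat \<Rightarrow> 'a"
  assumes n_pos: "1 \<le> n" and n_le: "2 * n \<le> t"
    and d_dec: "\<forall>i\<in>{1..<t}. d (i + 1) < d i"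
    and d_t: "d t \<ge> 1"
    and c_sum: "\<forall>j\<in>{1..n}. (\<Sum>i=1..n. c j i) < d t"
    and H: "hyp_H n t A"
begin

definition torus :: "(nat \<Rightarrow> 'a) set" where
  "torus = PiE {1..n} (\<lambda>_. UNIV - {0})"

definition rhs :: "(nat \<Rightarrow> 'a) \<Rightarrow> nat \<Rightarrow> 'a" where
  "rhs x = restrict (\<lambda>j. b j * monom_eval n (c j) x - a j - (\<Sum>i=1..n. A j i * x i ^ d i)) {1..n}"

definition unsolvable :: "(nat \<Rightarrow> 'a) set" where
  "unsolvable = {w \<in> vectors n. diag_solutions n {n+1..t} A d w = {}}"

lemma d_antimono:
  assumes "1 \<le> i" "i \<le> j" "j \<le> t"
  shows "d j \<le> d i"
  using assms(2,3)
proof (induction j rule: dec_induct)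
  case (step k)
  hence "d (k + 1) < d k" using d_dec assms(1) by simp
  thus ?case using step by simp
qed simp

lemma d_bounds:
  assumes "i \<in> {1..t}"
  shows "d t \<le> d i" "1 \<le> d i" "d i \<le> d 1"
  using d_antimono[of i t] d_antimono[of 1 i] d_t assms by auto

lemma card_unsolvable_le:
  "real (card unsolvable) * real (card (UNIV :: 'a set) - 1) ^ (2 * (t - n))
     \<le> real (card (UNIV :: 'a set)) ^ n *
        ((real (card (UNIV :: 'a set)) * real (d 1) ^ 2) ^ (t - 2 * n) * real (t - n choose n)
         * (real (card (UNIV :: 'a set)) * real (card (UNIV :: 'a set) - 1) * real (d 1)) ^ n)"
proof -
  let ?I = "{n+1..t}"
  have "real (card unsolvable) * real (card (UNIV :: 'a set) - 1) ^ (2 * card ?I)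
     \<le> real (card (UNIV :: 'a set) ^ n) *
        (\<Sum>\<xi>\<in>vectors n - {zero_vector n}. (cmod (\<Prod>i\<in>?I. mono_sum (d i) (row_comb n A \<xi> i)))\<^sup>2)"
    unfolding unsolvable_def by (rule card_unsolvable_diag_le) simp
  also have "\<dots> \<le> real (card (UNIV :: 'a set) ^ n) *
      ((real (card (UNIV :: 'a set)) * real (d 1) ^ 2) ^ (card ?I - n) * real (card ?I choose n)
       * (real (card (UNIV :: 'a set)) * real (card (UNIV :: 'a set) - 1) * real (d 1)) ^ n)"
    using n_le d_bounds by (intro mult_left_mono sum_norm_prod_mono_sum_le hyp_H_bij_restrict[OF H]) auto
  finally show ?thesis by (simp add: numeral_2_eq_2)
qed

lemma card_fibre_le: "card {x \<in> torus. rhs x = w} \<le> d 1 ^ n"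
proof -
  let ?Z = "{x \<in> torus. rhs x = w}"
  obtain \<Lambda> where \<Lambda>: "\<And>k i. k \<in> {1..n} \<Longrightarrow> i \<in> {1..n} \<Longrightarrow> row_comb n A (\<Lambda> k) i = of_bool (i = k)"
    using hyp_H_left_inverse[OF H] n_le by auto
  interpret power_reduction n d ?Z "\<lambda>k. - (\<Sum>j=1..n. \<Lambda> k j * (a j + w j))" "\<lambda>k j. \<Lambda> k j * b j" c
  proof
    fix k assume k: "k \<in> {1..n}"
    hence "k \<in> {1..t}" using n_le by auto
    thus "1 \<le> d k" by (rule d_bounds)
    fix j assume "j \<in> {1..n}"
    thus "(\<Sum>i=1..n. c j i) < d k"
      using c_sum d_bounds(1)[OF \<open>k \<in> {1..t}\<close>] by fastforce
  next
    show "?Z \<subseteq> vectors n" by (auto simp: torus_def vectors_def)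
  next
    fix x k assume x: "x \<in> ?Z" and k: "k \<in> {1..n}"
    have eq: "(\<Sum>i=1..n. A j i * x i ^ d i) = b j * monom_eval n (c j) x - (a j + w j)" if "j \<in> {1..n}" for j
      using x that by (auto simp: rhs_def)
    have "(\<Sum>i=1..n. row_comb n A (\<Lambda> k) i * x i ^ d i) = (\<Sum>i=1..n. if i = k then x i ^ d i else 0)"
      by (intro sum.cong refl) (simp add: \<Lambda>[OF k])
    hence "x k ^ d k = (\<Sum>i=1..n. row_comb n A (\<Lambda> k) i * x i ^ d i)"
      using k by simp
    also have "\<dots> = (\<Sum>j=1..n. \<Lambda> k j * (\<Sum>i=1..n. A j i * x i ^ d i))"
      by (simp add: row_comb_def sum_distrib_left sum_distrib_right mult.assoc) (rule sum.swap)
    also have "\<dots> = (\<Sum>j=1..n. \<Lambda> k j * (b j * monom_eval n (c j) x - (a j + w j)))"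
      by (intro sum.cong refl) (simp only: eq)
    also have "\<dots> = - (\<Sum>j=1..n. \<Lambda> k j * (a j + w j)) + (\<Sum>j=1..n. \<Lambda> k j * b j * monom_eval n (c j) x)"
      by (simp add: algebra_simps sum_subtractf)
    finally show "x k ^ d k = - (\<Sum>j=1..n. \<Lambda> k j * (a j + w j)) + (\<Sum>j=1..n. \<Lambda> k j * b j * monom_eval n (c j) x)" .
  qed
  have "card ?Z \<le> (\<Prod>k=1..n. d k)" by (rule card_le_prod_degrees)
  also have "\<dots> \<le> (\<Prod>k=1..n. d 1)" using n_le d_bounds by (intro prod_mono) auto
  finally show ?thesis by simp
qed

lemma rhs_unsolvable:
  assumes no_solution: "\<not> (\<exists>x. (\<forall>i\<in>{1..t}. x i \<noteq> 0) \<and>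
      (\<forall>j\<in>{1..n}. (\<Sum>i=1..t. A j i * x i ^ d i) + a j = b j * monom_eval n (c j) x))"
    and x: "x \<in> torus"
  shows "rhs x \<in> unsolvable"
proof -
  have "diag_solutions n {n+1..t} A d (rhs x) = {}"
  proof (rule ccontr)
    assume "diag_solutions n {n+1..t} A d (rhs x) \<noteq> {}"
    then obtain y where y: "y \<in> PiE {n+1..t} (\<lambda>_. UNIV - {0})"
      and y_eq: "\<And>j. j \<in> {1..n} \<Longrightarrow> (\<Sum>i=n+1..t. A j i * y i ^ d i) = rhs x j"
      unfolding diag_solutions_def by blast
    define z where "z i = (if i \<le> n then x i else y i)" for i
    have "z i \<noteq> 0" if "i \<in> {1..t}" for i
      using that x y by (cases "i \<le> n") (auto simp: z_def torus_def)
    moreover have "(\<Sum>i=1..t. A j i * z i ^ d i) + a j = b j * monom_eval n (c j) z" if j: "j \<in> {1..n}" for j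
    proof -
      have "{1..t} = {1..n} \<union> {n+1..t}" using n_le by auto
      hence "(\<Sum>i=1..t. A j i * z i ^ d i) = (\<Sum>i=1..n. A j i * z i ^ d i) + (\<Sum>i=n+1..t. A j i * z i ^ d i)"
        by (simp add: sum.union_disjoint)
      also have "(\<Sum>i=1..n. A j i * z i ^ d i) = (\<Sum>i=1..n. A j i * x i ^ d i)"
        by (intro sum.cong refl) (simp add: z_def)
      also have "(\<Sum>i=n+1..t. A j i * z i ^ d i) = rhs x j"
        unfolding y_eq[OF j, symmetric] by (intro sum.cong refl) (simp add: z_def)
      also have "monom_eval n (c j) z = monom_eval n (c j) x"
        by (simp add: monom_eval_def z_def)
      ultimately show ?thesis using j by (simp add: rhs_def)
    qed
    ultimately show False using no_solution by blast
  qed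
  thus ?thesis by (simp add: unsolvable_def rhs_def vectors_def)
qed

lemma card_torus_le:
  assumes no_solution: "\<not> (\<exists>x. (\<forall>i\<in>{1..t}. x i \<noteq> 0) \<and>
      (\<forall>j\<in>{1..n}. (\<Sum>i=1..t. A j i * x i ^ d i) + a j = b j * monom_eval n (c j) x))"
  shows "(card (UNIV :: 'a set) - 1) ^ n \<le> card unsolvable * d 1 ^ n"
proof -
  have "(card (UNIV :: 'a set) - 1) ^ n = card torus"
    by (simp add: torus_def card_PiE card_nonzero_field)
  also have "\<dots> \<le> card (\<Union>w\<in>rhs ` torus. {x \<in> torus. rhs x = w})"
    by (intro card_mono) (auto simp: torus_def finite_PiE)
  also have "\<dots> \<le> (\<Sum>w\<in>rhs ` torus. card {x \<in> torus. rhs x = w})"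
    by (rule card_UN_le) (simp add: torus_def finite_PiE)
  also have "\<dots> \<le> card (rhs ` torus) * d 1 ^ n"
    using sum_mono[OF card_fibre_le] by simp
  also have "\<dots> \<le> card unsolvable * d 1 ^ n"
    using rhs_unsolvable[OF no_solution]
    by (intro mult_right_mono card_mono) (auto simp: unsolvable_def)
  finally show ?thesis .
qed

lemma field_size_bound:
  assumes no_solution: "\<not> (\<exists>x. (\<forall>i\<in>{1..t}. x i \<noteq> 0) \<and>
      (\<forall>j\<in>{1..n}. (\<Sum>i=1..t. A j i * x i ^ d i) + a j = b j * monom_eval n (c j) x))"
  shows "real (card (UNIV :: 'a set)) ^ (t - 2 * n) \<le> 16 ^ t * real (d 1) ^ (2 * t)"
proof -
  let ?q = "real (card (UNIV :: 'a set))"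
  have q: "?q \<ge> 2" using card_UNIV_field_ge_2[where 'a='a] by simp
  have m: "t - n = n + (t - 2 * n)" using n_le by simp
  have D: "real (d 1) \<ge> 1" using d_bounds(2)[of 1] n_pos n_le by simp
  have q1: "real (card (UNIV :: 'a set) - 1) = ?q - 1" using q by simp
  have "real ((card (UNIV :: 'a set) - 1) ^ n) \<le> real (card unsolvable * d 1 ^ n)"
    using card_torus_le[OF no_solution] by (simp only: of_nat_le_iff)
  hence fibres: "(?q - 1) ^ n \<le> real (card unsolvable) * real (d 1) ^ n"
    by (simp only: of_nat_power of_nat_mult q1)
  have C: "real (n + (t - 2 * n) choose n) \<le> 2 ^ (n + (t - 2 * n))"
    using binomial_le_pow2[of "n + (t - 2 * n)" n] by (simp flip: of_nat_power)
  have "?q ^ (t - 2 * n) \<le> 16 ^ (n + (t - 2 * n)) * real (d 1) ^ (2 * (n + (t - 2 * n)))"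
    by (rule power_bound_of_counts[OF q D fibres card_unsolvable_le[unfolded m q1] _ C]) simp
  hence "?q ^ (t - 2 * n) \<le> 16 ^ (t - n) * real (d 1) ^ (2 * (t - n))"
    by (simp only: m)
  also have "\<dots> \<le> 16 ^ t * real (d 1) ^ (2 * t)"
    using D by (intro mult_mono power_increasing) auto
  finally show ?thesis .
qed

end

theorem mainTheorem16:
  fixes t n :: nat
    and d :: "nat \<Rightarrow> nat"
    and c :: "nat \<Rightarrow> nat \<Rightarrow> nat"
    and A :: "nat \<Rightarrow> nat \<Rightarrow> 'a::{finite, field}"
    and a b :: "nat \<Rightarrow> 'a"
  assumes n_pos: "1 \<le> n"
    and n_lt: "real n < (real t - 1) / 2"
    and d_dec: "\<forall>i\<in>{1..<t}. d (i + 1) < d i"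
    and d_t: "d t \<ge> 2"
    and d_char: "\<forall>i\<in>{1..t}. \<not> CHAR('a) dvd d i"
    and c_pos: "\<forall>j\<in>{1..n}. \<forall>i\<in>{1..n}. c j i > 0"
    and c_sum: "\<forall>j\<in>{1..n}. (\<Sum>i=1..n. c j i) < d t"
    and H: "hyp_H n t A"
    and a_nz: "\<exists>j\<in>{1..n}. a j \<noteq> 0"
    and b_nz: "\<forall>j\<in>{1..n}. b j \<noteq> 0"
    and q_big: "real (card (UNIV :: 'a set)) > (30 * real n * real (d 1)) powr ((2 * real t + 2) / (real t - 2 * real n))"
  shows "\<exists>x :: nat \<Rightarrow> 'a. (\<forall>i\<in>{1..t}. x i \<noteq> 0) \<and>
           (\<forall>j\<in>{1..n}. (\<Sum>i=1..t. A j i * x i ^ d i) + a j = b j * (\<Prod>i=1..n. x i ^ c j i))"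
proof (rule ccontr)
  assume no_solution: "\<not> (\<exists>x :: nat \<Rightarrow> 'a. (\<forall>i\<in>{1..t}. x i \<noteq> 0) \<and>
           (\<forall>j\<in>{1..n}. (\<Sum>i=1..t. A j i * x i ^ d i) + a j = b j * (\<Prod>i=1..n. x i ^ c j i)))"
  have "2 * real n + 1 < real t" using n_lt by (simp add: field_simps)
  hence t: "2 * n + 2 \<le> t" by linarith
  interpret mh_system t n d c A a b
    using n_pos t d_dec d_t c_sum H by unfold_locales auto
  have "real (card (UNIV :: 'a set)) ^ (t - 2 * n) \<le> 16 ^ t * real (d 1) ^ (2 * t)"
    using no_solution by (intro field_size_bound) (simp add: monom_eval_def)
  moreover have "real (d 1) \<ge> 1" using d_bounds(2)[of 1] n_pos t by simp
  ultimately show False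
    using large_field_contradiction[OF _ n_pos t q_big] by blast
qed

end
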